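(* Let $X_{\mu,\varepsilon}$ be a two-parameter family of $C^r$ ($r\ge2$) vector fields on $\mathbb{R}^{n+1}$, $n\ge2$, all invariant under an involution $R$, with an $R$-symmetric saddle equilibrium $O$ ($RO=O$, $R$ linear near $O$), $\dim W^u(O)=1$, with characteristic exponents $\gamma>0>\lambda_1>\max_{i\ge2}\mathrm{Re}\,\lambda_i$, whose eigenvectors satisfy $Re_0=-e_0$ (for $\gamma$) and $Re_1=e_1$ (for $\lambda_1$), so that the two unstable separatrices satisfy $\Gamma_+=R\Gamma_-$. Assume that at $(\mu,\varepsilon)=(0,0)$: (i) both $\Gamma_\pm$ are homoclinic to $O$ and tend to $O$ tangentially to $e_1$ (homoclinic butterfly); (ii) $\gamma+\lambda_1=0$; (iii) the separatrix value $A$ satisfies $0<|A|<2$. Assume the family is a generic unfolding in the sense that, on a common symmetric cross-section $\Pi$ with coordinates $(u,v)$ ($u$ along $e_1$, $\{u=0\}=\Pi\cap W^s_{loc}(O)$), the Poincaré map has the form $$\bar u=\big(\mu+A|u|^{1-\varepsilon}+p(|u|,Q_{s(u)}v,\mu,\varepsilon)\big)s(u),\qquad \bar v=Q_{s(u)}\big(v_++B|u|^{1-\varepsilon}+q(|u|,Q_{s(u)}v,\mu,\varepsilon)\big),$$ where $s(u)=\mathrm{sign}(u)$, $Q_1=\mathrm{Id}$, $Q_{-1}$ is $R$ restricted to the $v$-space, $A,B,v_+$ depend continuously on $(\mu,\varepsilon)$, and $\|p,q,\partial_v(p,q)\|=o(|u|^{1-\varepsilon})$, $\|\partial_u(p,q)\|=o(|u|^{-\varepsilon})$.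 Then there is an open region $V_{LA}$ in the $(\mu,\varepsilon)$-plane whose closure contains $(0,0)$ such that $X_{\mu,\varepsilon}$ possesses a Lorenz attractor for all $(\mu,\varepsilon)\in V_{LA}$.
   Context: Lorenz attractor (Afraimovich–Bykov–Shilnikov sense): with $\Pi$ a cross-section transverse to $W^s(O)$, $\Pi_0$ its first intersection with $W^s(O)$ splitting $\Pi$ into $\Pi_\pm=\{\pm u>0\}$, the system possesses a Lorenz attractor if both unstable separatrices hit $\Pi$ and there is a closed region $D\subset\Pi$ with $T(D\setminus\Pi_0)\subset\mathrm{int}(D)$ for the Poincaré map $T:\ \bar u=f_\pm(u,v),\ \bar v=g_\pm(u,v)$ on $\Pi_\pm$, satisfying $$\|(f'_u)^{-1}\|_\circ<1,\quad \|g'_v\|_\circ<1,\quad \|g'_u(f'_u)^{-1}\|_\circ\,\|f'_v\|_\circ<(1-\|(f'_u)^{-1}\|_\circ)(1-\|g'_v\|_\circ),$$ with $\|\cdot\|_\circ=\sup_{D\cap\Pi_\pm}\|\cdot\|$. The separatrix value $A$ is the coefficient of $|u|^{\nu}$, $\nu=|\lambda_1|/\gamma$, in the asymptotics $\bar u=u_++A|u|^\nu+o(|u|^\nu)$ of the Poincaré map near $\Pi_0$ on the side $u>0$; in the parametrised family $\mu=u_+$ is the splitting of the loops and $\nu=1-\varepsilon$. *)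

theory Defs
  imports "HOL-Analysis.Analysis"
begin

text \<open>Cross-section coordinates: a point of the cross-section is a pair (u,v) with
  u :: real (the coordinate along e_1) and v in the (n-1)-dimensional v-space 'v.
  The local stable manifold trace is Pi_0 = {u = 0}.\<close>

definition Pi0 :: "(real \<times> 'v) set" where
  "Pi0 = {x. fst x = 0}"

definition poincare_map ::
  "(real \<times> real \<Rightarrow> real) \<Rightarrow> (real \<times> real \<Rightarrow> 'v::real_vector) \<Rightarrow> (real \<times> real \<Rightarrow> 'v)
   \<Rightarrow> ('v \<Rightarrow> 'v) \<Rightarrow> (real \<Rightarrow> 'v \<Rightarrow> real \<times> real \<Rightarrow> real) \<Rightarrow> (real \<Rightarrow> 'v \<Rightarrow> real \<times> real \<Rightarrow> 'v)
   \<Rightarrow> real \<times> real \<Rightarrow> real \<times> 'v \<Rightarrow> real \<times> 'v" where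
  "poincare_map A B vp Q p q par = (\<lambda>(u, v).
     let Qs = (if u > 0 then id else Q); w = Qs v; eps = snd par in
     ((fst par + A par * \<bar>u\<bar> powr (1 - eps) + p \<bar>u\<bar> w par) * sgn u,
      Qs (vp par + (\<bar>u\<bar> powr (1 - eps)) *\<^sub>R B par + q \<bar>u\<bar> w par)))"

text \<open>Lorenz attractor in the Afraimovich-Bykov-Shilnikov sense for a Poincare map T on
  the cross-section Pi, where Pp, Pm are the points where the two unstable separatrices
  hit Pi.  D is a closed region (closure of a nonempty connected open set) in Pi with
  T(D - Pi0) in int D, and the hyperbolicity conditions hold with the sup-norms over
  D - Pi0 = (D n Pi_+) u (D n Pi_-); "sup <= a" is written as a uniform bound a.
  For the derivative DT x of T at x: f'_u = fst (DT x (1,0)), f'_v = fst o DT x o (0,_),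
  g'_u = snd (DT x (1,0)), g'_v = snd o DT x o (0,_).\<close>

definition lorenz_attractor ::
  "(real \<times> 'v::real_normed_vector) set \<Rightarrow> (real \<times> 'v \<Rightarrow> real \<times> 'v) \<Rightarrow> real \<times> 'v \<Rightarrow> real \<times> 'v \<Rightarrow> bool"
  where
  "lorenz_attractor S T Pp Pm \<longleftrightarrow>
     Pp \<in> S \<and> Pm \<in> S \<and>
     (\<exists>D. closed D \<and> D \<subseteq> S \<and> interior D \<noteq> {} \<and> connected (interior D) \<and>
          closure (interior D) = D \<and>
          T ` (D - Pi0) \<subseteq> interior D \<and>
          (\<exists>DT a b c d. a < 1 \<and> b < 1 \<and> c * d < (1 - a) * (1 - b) \<and>
             (\<forall>x \<in> D - Pi0.
                (T has_derivative DT x) (at x) \<and>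
                fst (DT x (1, 0)) \<noteq> 0 \<and>
                1 / \<bar>fst (DT x (1, 0))\<bar> \<le> a \<and>
                onorm (\<lambda>k. snd (DT x (0, k))) \<le> b \<and>
                norm (snd (DT x (1, 0))) / \<bar>fst (DT x (1, 0))\<bar> \<le> c \<and>
                onorm (\<lambda>k. fst (DT x (0, k))) \<le> d)))"

end

theory Submission
  imports Defs
begin

text \<open>Near \<open>(\<mu>, \<epsilon>) = (0, 0)\<close> the \<open>u\<close>-component of the Poincare map is essentially the
  one-dimensional map \<open>u \<mapsto> \<mu> + A \<bar>u\<bar>\<^sup>1\<^sup>-\<^sup>\<epsilon>\<close>, whose derivative
  \<open>A (1 - \<epsilon>) \<bar>u\<bar>\<^sup>-\<^sup>\<epsilon>\<close> is unbounded as \<open>u \<rightarrow> 0\<close> once \<open>\<epsilon> > 0\<close>. Fix \<open>\<kappa>\<close> with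
  \<open>max 1 \<bar>A(0,0)\<bar> < \<kappa> < 2\<close> (possible because \<open>\<bar>A\<bar> < 2\<close>) and choose the half-width \<open>U\<close> of a box so
  that \<open>\<bar>A\<bar> U\<^sup>-\<^sup>\<epsilon> \<approx> \<kappa>\<close>. On \<open>[-U, U]\<close> the map then expands by at least about \<open>\<kappa> > 1\<close>, and
  for \<open>\<mu> \<approx> -sgn(A) \<kappa> U / 2\<close> both halves of \<open>[-U, U]\<close> are mapped into an interval of
  length about \<open>\<kappa> U < 2 U\<close> inside \<open>(-U, U)\<close>. The remainders \<open>p, q\<close> and the \<open>v\<close>-dependence
  are small against these quantities, so the box \<open>[-U, U] \<times> K\<close>, with \<open>K\<close> a convex
  neighbourhood of \<open>v\<^sub>+\<close> and \<open>Q v\<^sub>+\<close>, is mapped into its interior and the hyperbolicity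
  conditions hold. The admissible parameters form open cells (one for each small \<open>U\<close>) that
  accumulate at the origin.\<close>

section \<open>The derivative of the Poincare map\<close>

lemma has_derivative_powr_scaled:
  fixes s u \<nu> :: real
  assumes "s * u > 0"
  shows "((\<lambda>(y::real, w::'v::real_normed_vector). (s * y) powr \<nu>) has_derivative
          (\<lambda>(h, k). h * (s * \<nu> * (s * u) powr (\<nu> - 1)))) (at (u, v))"
proof -
  have "((\<lambda>z::real \<times> 'v. (s * fst z) powr \<nu>) has_derivative
         (\<lambda>h. ((s * u) powr \<nu>) * ((\<lambda>_. 0) h * ln (s * u) + (s * fst h) * \<nu> / (s * u)))) (at (u, v))"
    using assms by (intro derivative_eq_intros) auto
  moreover have "(\<lambda>h::real \<times> 'v. ((s * u) powr \<nu>) * (0 * ln (s * u) + (s * fst h) * \<nu> / (s * u)))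
        = (\<lambda>(h, k). h * (s * \<nu> * (s * u) powr (\<nu> - 1)))"
    using assms by (auto simp: fun_eq_iff powr_diff field_simps)
  ultimately show ?thesis by (simp add: case_prod_beta')
qed

text \<open>The Poincare map on the half-plane \<open>s u > 0\<close>, where \<open>\<bar>u\<bar> = s u\<close> and \<open>sgn u = s\<close>.\<close>

lemma has_derivative_poincare_branch:
  fixes s u \<mu> a \<nu> :: real and L :: "'v::euclidean_space \<Rightarrow> 'v"
    and P :: "real \<Rightarrow> 'v \<Rightarrow> real" and R :: "real \<Rightarrow> 'v \<Rightarrow> 'v"
    and Pv :: "'v \<Rightarrow> real" and Rv :: "'v \<Rightarrow> 'v"
  assumes s: "s * s = 1" and su: "s * u > 0" and L: "linear L"
    and P: "((\<lambda>(y, w). P y w) has_derivative (\<lambda>(h, k). h * Pu + Pv k)) (at (s * u, L v))"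
    and R: "((\<lambda>(y, w). R y w) has_derivative (\<lambda>(h, k). h *\<^sub>R Ru + Rv k)) (at (s * u, L v))"
  shows "((\<lambda>(y, w). (s * (\<mu> + a * (s * y) powr \<nu> + P (s * y) (L w)),
                     L (c + ((s * y) powr \<nu>) *\<^sub>R b + R (s * y) (L w))))
     has_derivative (\<lambda>(h, k). (h * (a * \<nu> * (s * u) powr (\<nu> - 1) + Pu) + s * Pv (L k),
          L ((s * h * \<nu> * (s * u) powr (\<nu> - 1)) *\<^sub>R b + (s * h) *\<^sub>R Ru + Rv (L k))))) (at (u, v))"
proof -
  have bL: "bounded_linear L" using L by (simp add: linear_conv_bounded_linear)
  let ?\<phi> = "\<lambda>(y::real, w::'v). (s * y, L w)"
  have "bounded_linear (\<lambda>(h::real, k). (s * h, L k))"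
    using bL by (auto intro!: bounded_linear_Pair bounded_linear_compose[OF bL] bounded_linear_fst
        bounded_linear_snd bounded_linear_compose[OF bounded_linear_mult_right bounded_linear_fst]
        simp: case_prod_beta')
  then have \<phi>: "(?\<phi> has_derivative (\<lambda>(h, k). (s * h, L k))) (at (u, v))"
    by (simp add: bounded_linear_imp_has_derivative)
  have P\<phi>: "((\<lambda>z. (\<lambda>(y, w). P y w) (?\<phi> z)) has_derivative
      (\<lambda>z. (\<lambda>(h, k). h * Pu + Pv k) ((\<lambda>(h, k). (s * h, L k)) z))) (at (u, v))"
    by (rule has_derivative_compose[OF \<phi>]) (simp add: P)
  have R\<phi>: "((\<lambda>z. (\<lambda>(y, w). R y w) (?\<phi> z)) has_derivative
      (\<lambda>z. (\<lambda>(h, k). h *\<^sub>R Ru + Rv k) ((\<lambda>(h, k). (s * h, L k)) z))) (at (u, v))"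
    by (rule has_derivative_compose[OF \<phi>]) (simp add: R)
  note pow = has_derivative_powr_scaled[OF su, of \<nu> v]
  have "((\<lambda>z. (s * (\<mu> + a * (\<lambda>(y, w). (s * y) powr \<nu>) z + (\<lambda>(y, w). P y w) (?\<phi> z)),
             L (c + ((\<lambda>(y, w). (s * y) powr \<nu>) z) *\<^sub>R b + (\<lambda>(y, w). R y w) (?\<phi> z))))
     has_derivative (\<lambda>z. (s * (0 + a * (\<lambda>(h, k). h * (s * \<nu> * (s * u) powr (\<nu> - 1))) z +
        (\<lambda>(h, k). h * Pu + Pv k) ((\<lambda>(h, k). (s * h, L k)) z)),
       L (0 + ((\<lambda>(h, k). h * (s * \<nu> * (s * u) powr (\<nu> - 1))) z) *\<^sub>R b +
        (\<lambda>(h, k). h *\<^sub>R Ru + Rv k) ((\<lambda>(h, k). (s * h, L k)) z))))) (at (u, v))"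
    by (intro has_derivative_Pair has_derivative_mult_right has_derivative_add has_derivative_const
        bounded_linear.has_derivative[OF bL] has_derivative_scaleR_left pow P\<phi> R\<phi>)
  note th = this[unfolded case_prod_beta' fst_conv snd_conv]
  show ?thesis unfolding case_prod_beta' fst_conv snd_conv
    by (rule has_derivative_eq_rhs[OF th]) (use s in \<open>auto simp: fun_eq_iff algebra_simps\<close>)
qed

definition poincare_map_derivative ::
  "(real \<times> real \<Rightarrow> real) \<Rightarrow> (real \<times> real \<Rightarrow> 'v::real_normed_vector) \<Rightarrow> ('v \<Rightarrow> 'v)
   \<Rightarrow> (real \<Rightarrow> 'v \<Rightarrow> real \<times> real \<Rightarrow> real) \<Rightarrow> (real \<Rightarrow> 'v \<Rightarrow> real \<times> real \<Rightarrow> ('v \<Rightarrow>\<^sub>L real))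
   \<Rightarrow> (real \<Rightarrow> 'v \<Rightarrow> real \<times> real \<Rightarrow> 'v) \<Rightarrow> (real \<Rightarrow> 'v \<Rightarrow> real \<times> real \<Rightarrow> ('v \<Rightarrow>\<^sub>L 'v))
   \<Rightarrow> real \<times> real \<Rightarrow> real \<times> 'v \<Rightarrow> real \<times> 'v \<Rightarrow> real \<times> 'v" where
  "poincare_map_derivative A B Q pu pv qu qv par = (\<lambda>(u, v) (h, k).
     let s = sgn u; L = (if u > 0 then id else Q); x = \<bar>u\<bar>; w = L v; eps = snd par in
     (h * (A par * (1 - eps) * x powr (- eps) + pu x w par) + s * blinfun_apply (pv x w par) (L k),
      L ((s * h * (1 - eps) * x powr (- eps)) *\<^sub>R B par + (s * h) *\<^sub>R qu x w par
         + blinfun_apply (qv x w par) (L k))))"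

lemma poincare_map_has_derivative:
  fixes Q :: "'v::euclidean_space \<Rightarrow> 'v" and u :: real and v :: 'v
  defines "L \<equiv> if u > 0 then id else Q"
  assumes Q: "linear Q" and u: "u \<noteq> 0"
    and p: "((\<lambda>(y, w). p y w par) has_derivative
           (\<lambda>(h, k). h * pu \<bar>u\<bar> (L v) par + blinfun_apply (pv \<bar>u\<bar> (L v) par) k)) (at (\<bar>u\<bar>, L v))"
    and q: "((\<lambda>(y, w). q y w par) has_derivative
           (\<lambda>(h, k). h *\<^sub>R qu \<bar>u\<bar> (L v) par + blinfun_apply (qv \<bar>u\<bar> (L v) par) k)) (at (\<bar>u\<bar>, L v))"
  shows "(poincare_map A B vp Q p q par has_derivative
          poincare_map_derivative A B Q pu pv qu qv par (u, v)) (at (u, v))"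
proof -
  define s where "s = sgn u"
  have s: "s * s = 1" "s * u > 0" "s * u = \<bar>u\<bar>" using u by (auto simp: s_def sgn_if)
  have "linear L" using Q by (auto simp: L_def linear_id)
  note branch = has_derivative_poincare_branch[OF s(1,2) this,
      where P = "\<lambda>y w. p y w par" and Pu = "pu \<bar>u\<bar> (L v) par" and Pv = "blinfun_apply (pv \<bar>u\<bar> (L v) par)"
        and R = "\<lambda>y w. q y w par" and Ru = "qu \<bar>u\<bar> (L v) par" and Rv = "blinfun_apply (qv \<bar>u\<bar> (L v) par)"
        and \<mu> = "fst par" and a = "A par" and \<nu> = "1 - snd par" and c = "vp par" and b = "B par"]
  have on_half_plane: "((\<lambda>(y, w). (s * (fst par + A par * (s * y) powr (1 - snd par) + p (s * y) (L w) par),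
        L (vp par + ((s * y) powr (1 - snd par)) *\<^sub>R B par + q (s * y) (L w) par)))
      has_derivative poincare_map_derivative A B Q pu pv qu qv par (u, v)) (at (u, v))"
    using p q unfolding s(3)
    by (intro has_derivative_eq_rhs[OF branch])
       (auto simp: poincare_map_derivative_def s_def L_def Let_def fun_eq_iff s(3)[unfolded s_def])
  show ?thesis
  proof (rule has_derivative_transform_within_open[OF on_half_plane, of "{z. s * fst z > 0}"])
    show "open {z::real \<times> 'v. s * fst z > 0}"
      by (rule open_Collect_less) (intro continuous_intros)+
    show "(u, v) \<in> {z. s * fst z > 0}" using s by simp
  next
    fix z :: "real \<times> 'v" assume "z \<in> {z. s * fst z > 0}"
    then obtain y w where z: "z = (y, w)" and sy: "s * y > 0" by (cases z) auto
    have "sgn y = s \<and> (0 < y) = (0 < u) \<and> \<bar>y\<bar> = s * y"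
      using sy u by (cases "u > 0") (auto simp: s_def sgn_if zero_less_mult_iff)
    then show "(\<lambda>(y, w). (s * (fst par + A par * (s * y) powr (1 - snd par) + p (s * y) (L w) par),
        L (vp par + ((s * y) powr (1 - snd par)) *\<^sub>R B par + q (s * y) (L w) par))) z
      = poincare_map A B vp Q p q par z"
      by (simp add: z poincare_map_def Let_def L_def mult.commute)
  qed
qed

lemma poincare_map_derivative_components:
  fixes Q :: "'v::euclidean_space \<Rightarrow> 'v" and u :: real and v :: 'v
  defines "L \<equiv> if u > 0 then id else Q"
  assumes "linear Q"
  shows "fst (poincare_map_derivative A B Q pu pv qu qv (\<mu>, \<epsilon>) (u, v) (1, 0))
           = A (\<mu>, \<epsilon>) * (1 - \<epsilon>) * \<bar>u\<bar> powr (- \<epsilon>) + pu \<bar>u\<bar> (L v) (\<mu>, \<epsilon>)"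
    and "snd (poincare_map_derivative A B Q pu pv qu qv (\<mu>, \<epsilon>) (u, v) (1, 0))
           = L ((sgn u * (1 - \<epsilon>) * \<bar>u\<bar> powr (- \<epsilon>)) *\<^sub>R B (\<mu>, \<epsilon>) + sgn u *\<^sub>R qu \<bar>u\<bar> (L v) (\<mu>, \<epsilon>))"
    and "fst (poincare_map_derivative A B Q pu pv qu qv (\<mu>, \<epsilon>) (u, v) (0, k))
           = sgn u * blinfun_apply (pv \<bar>u\<bar> (L v) (\<mu>, \<epsilon>)) (L k)"
    and "snd (poincare_map_derivative A B Q pu pv qu qv (\<mu>, \<epsilon>) (u, v) (0, k))
           = L (blinfun_apply (qv \<bar>u\<bar> (L v) (\<mu>, \<epsilon>)) (L k))"
  using assms by (simp_all add: poincare_map_derivative_def Let_def L_def linear_0)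

lemma norm_id_or_linear_le:
  fixes Q :: "'v::euclidean_space \<Rightarrow> 'v"
  assumes "linear Q"
  shows "norm ((if b then id else Q) k) \<le> max 1 (onorm Q) * norm k"
proof (cases b)
  case True
  have "1 * norm k \<le> max 1 (onorm Q) * norm k" by (intro mult_right_mono) auto
  then show ?thesis using True by simp
next
  case False
  have "norm (Q k) \<le> onorm Q * norm k"
    using assms by (intro onorm) (simp add: linear_conv_bounded_linear)
  also have "\<dots> \<le> max 1 (onorm Q) * norm k" by (intro mult_right_mono) auto
  finally show ?thesis using False by simp
qed

section \<open>Boxes on which the Poincare map is hyperbolic\<close>

text \<open>\<open>c\<^sub>0\<close> and \<open>Q c\<^sub>0\<close> are the centres of the \<open>v\<close>-images of the halves \<open>u > 0\<close> and \<open>u < 0\<close>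
  of the box \<open>[-U, U] \<times> K\<close>.\<close>

locale poincare_box =
  fixes Q :: "'v::euclidean_space \<Rightarrow> 'v" and W K :: "'v set" and c\<^sub>0 :: 'v
    and \<delta> \<mu> \<epsilon> U r \<eta> a b c d :: real
    and A :: "real \<times> real \<Rightarrow> real" and B vp :: "real \<times> real \<Rightarrow> 'v"
    and p pu :: "real \<Rightarrow> 'v \<Rightarrow> real \<times> real \<Rightarrow> real"
    and q qu :: "real \<Rightarrow> 'v \<Rightarrow> real \<times> real \<Rightarrow> 'v"
    and pv :: "real \<Rightarrow> 'v \<Rightarrow> real \<times> real \<Rightarrow> ('v \<Rightarrow>\<^sub>L real)"
    and qv :: "real \<Rightarrow> 'v \<Rightarrow> real \<times> real \<Rightarrow> ('v \<Rightarrow>\<^sub>L 'v)"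
  assumes Q_linear: "linear Q" and Q_W: "Q ` W = W" and vp_W: "vp (\<mu>, \<epsilon>) \<in> W"
    and p_deriv: "\<And>x v. 0 < x \<Longrightarrow> x < \<delta> \<Longrightarrow> v \<in> W \<Longrightarrow>
        ((\<lambda>(y, w). p y w (\<mu>, \<epsilon>)) has_derivative
           (\<lambda>(h, k). h * pu x v (\<mu>, \<epsilon>) + blinfun_apply (pv x v (\<mu>, \<epsilon>)) k)) (at (x, v))"
    and q_deriv: "\<And>x v. 0 < x \<Longrightarrow> x < \<delta> \<Longrightarrow> v \<in> W \<Longrightarrow>
        ((\<lambda>(y, w). q y w (\<mu>, \<epsilon>)) has_derivative
           (\<lambda>(h, k). h *\<^sub>R qu x v (\<mu>, \<epsilon>) + blinfun_apply (qv x v (\<mu>, \<epsilon>)) k)) (at (x, v))"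
    and K: "closed K" "convex K" "K \<subseteq> W" "0 < r" "ball c\<^sub>0 r \<subseteq> K" "ball (Q c\<^sub>0) r \<subseteq> K"
    and U: "0 < U" "U < \<delta>" "\<bar>\<mu>\<bar> < \<delta>" "\<epsilon> < 1"
    and remainder_bounds: "\<And>x v. 0 < x \<Longrightarrow> x \<le> U \<Longrightarrow> v \<in> W \<Longrightarrow>
          \<bar>p x v (\<mu>, \<epsilon>)\<bar> \<le> \<eta> * x powr (1 - \<epsilon>) \<and>
          norm (q x v (\<mu>, \<epsilon>)) \<le> \<eta> * x powr (1 - \<epsilon>) \<and>
          norm (pv x v (\<mu>, \<epsilon>)) \<le> \<eta> * x powr (1 - \<epsilon>) \<and>
          norm (qv x v (\<mu>, \<epsilon>)) \<le> \<eta> * x powr (1 - \<epsilon>) \<and>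
          \<bar>pu x v (\<mu>, \<epsilon>)\<bar> \<le> \<eta> * x powr (- \<epsilon>) \<and>
          norm (qu x v (\<mu>, \<epsilon>)) \<le> \<eta> * x powr (- \<epsilon>)"
    and interval_invariant: "\<And>x P. 0 < x \<Longrightarrow> x \<le> U \<Longrightarrow> \<bar>P\<bar> \<le> \<eta> * x powr (1 - \<epsilon>) \<Longrightarrow>
          \<bar>\<mu> + A (\<mu>, \<epsilon>) * x powr (1 - \<epsilon>) + P\<bar> < U"
    and centre_invariant: "\<And>x z. 0 < x \<Longrightarrow> x \<le> U \<Longrightarrow> norm z \<le> \<eta> * x powr (1 - \<epsilon>) \<Longrightarrow>
          norm (vp (\<mu>, \<epsilon>) + x powr (1 - \<epsilon>) *\<^sub>R B (\<mu>, \<epsilon>) + z - c\<^sub>0) < r / max 1 (onorm Q)"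
    and expansion_bound: "\<And>x P. 0 < x \<Longrightarrow> x \<le> U \<Longrightarrow> \<bar>P\<bar> \<le> \<eta> * x powr (- \<epsilon>) \<Longrightarrow>
          1 \<le> a * \<bar>A (\<mu>, \<epsilon>) * (1 - \<epsilon>) * x powr (- \<epsilon>) + P\<bar>"
    and cross_u_bound: "\<And>x P G. 0 < x \<Longrightarrow> x \<le> U \<Longrightarrow> \<bar>P\<bar> \<le> \<eta> * x powr (- \<epsilon>) \<Longrightarrow>
          G \<le> max 1 (onorm Q) * (((1 - \<epsilon>) * norm (B (\<mu>, \<epsilon>)) + \<eta>) * x powr (- \<epsilon>)) \<Longrightarrow>
          G \<le> c * \<bar>A (\<mu>, \<epsilon>) * (1 - \<epsilon>) * x powr (- \<epsilon>) + P\<bar>"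
    and contraction_bound: "\<And>x. 0 < x \<Longrightarrow> x \<le> U \<Longrightarrow>
          max 1 (onorm Q) * (max 1 (onorm Q) * (\<eta> * x powr (1 - \<epsilon>))) \<le> b"
    and cross_v_bound: "\<And>x. 0 < x \<Longrightarrow> x \<le> U \<Longrightarrow> max 1 (onorm Q) * (\<eta> * x powr (1 - \<epsilon>)) \<le> d"
    and hyperbolicity: "a < 1" "b < 1" "c * d < (1 - a) * (1 - b)"
begin

abbreviation "T \<equiv> poincare_map A B vp Q p q (\<mu>, \<epsilon>)"
abbreviation "DT \<equiv> poincare_map_derivative A B Q pu pv qu qv (\<mu>, \<epsilon>)"
abbreviation "section_box \<equiv> {-U..U} \<times> K"
abbreviation "nQ \<equiv> max 1 (onorm Q)"

lemma interior_box: "interior section_box = {-U<..<U} \<times> interior K"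
  by (simp add: interior_Times)

lemma interior_K_nonempty: "interior K \<noteq> {}"
  using K interior_maximal[OF K(5)] by (auto dest!: subsetD[of _ _ c\<^sub>0])

lemma closure_interior_box: "closure (interior section_box) = section_box"
  using K U interior_K_nonempty
  by (simp add: interior_box closure_Times convex_closure_interior closure_closed)

lemma box_point_estimates:
  fixes u :: real and v :: 'v
  defines "L \<equiv> if u > 0 then id else Q"
  assumes "(u, v) \<in> section_box - Pi0"
  shows "u \<noteq> 0" "0 < \<bar>u\<bar>" "\<bar>u\<bar> \<le> U" "\<bar>u\<bar> < \<delta>" "L v \<in> W"
    and "\<bar>p \<bar>u\<bar> (L v) (\<mu>, \<epsilon>)\<bar> \<le> \<eta> * \<bar>u\<bar> powr (1 - \<epsilon>)"
      "norm (q \<bar>u\<bar> (L v) (\<mu>, \<epsilon>)) \<le> \<eta> * \<bar>u\<bar> powr (1 - \<epsilon>)"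
      "norm (pv \<bar>u\<bar> (L v) (\<mu>, \<epsilon>)) \<le> \<eta> * \<bar>u\<bar> powr (1 - \<epsilon>)"
      "norm (qv \<bar>u\<bar> (L v) (\<mu>, \<epsilon>)) \<le> \<eta> * \<bar>u\<bar> powr (1 - \<epsilon>)"
      "\<bar>pu \<bar>u\<bar> (L v) (\<mu>, \<epsilon>)\<bar> \<le> \<eta> * \<bar>u\<bar> powr (- \<epsilon>)"
      "norm (qu \<bar>u\<bar> (L v) (\<mu>, \<epsilon>)) \<le> \<eta> * \<bar>u\<bar> powr (- \<epsilon>)"
proof -
  show u: "u \<noteq> 0" "0 < \<bar>u\<bar>" "\<bar>u\<bar> \<le> U" and "\<bar>u\<bar> < \<delta>"
    using assms U by (auto simp: Pi0_def)
  have "v \<in> W" using assms K(3) by auto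
  then show v: "L v \<in> W" using Q_W by (auto simp: L_def)
  note remainder_bounds[OF u(2,3) v]
  then show "\<bar>p \<bar>u\<bar> (L v) (\<mu>, \<epsilon>)\<bar> \<le> \<eta> * \<bar>u\<bar> powr (1 - \<epsilon>)"
      "norm (q \<bar>u\<bar> (L v) (\<mu>, \<epsilon>)) \<le> \<eta> * \<bar>u\<bar> powr (1 - \<epsilon>)"
      "norm (pv \<bar>u\<bar> (L v) (\<mu>, \<epsilon>)) \<le> \<eta> * \<bar>u\<bar> powr (1 - \<epsilon>)"
      "norm (qv \<bar>u\<bar> (L v) (\<mu>, \<epsilon>)) \<le> \<eta> * \<bar>u\<bar> powr (1 - \<epsilon>)"
      "\<bar>pu \<bar>u\<bar> (L v) (\<mu>, \<epsilon>)\<bar> \<le> \<eta> * \<bar>u\<bar> powr (- \<epsilon>)"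
      "norm (qu \<bar>u\<bar> (L v) (\<mu>, \<epsilon>)) \<le> \<eta> * \<bar>u\<bar> powr (- \<epsilon>)"
    by auto
qed

lemma maps_box_into_interior:
  assumes z: "z \<in> section_box - Pi0"
  shows "T z \<in> interior section_box"
proof -
  obtain u v where uv: "z = (u, v)" by (cases z)
  define L where "L = (if u > 0 then id else Q)"
  note pt = box_point_estimates[OF z[unfolded uv], folded L_def]
  define y where "y = vp (\<mu>, \<epsilon>) + \<bar>u\<bar> powr (1 - \<epsilon>) *\<^sub>R B (\<mu>, \<epsilon>) + q \<bar>u\<bar> (L v) (\<mu>, \<epsilon>)"
  have Tz: "T z = ((\<mu> + A (\<mu>, \<epsilon>) * \<bar>u\<bar> powr (1 - \<epsilon>) + p \<bar>u\<bar> (L v) (\<mu>, \<epsilon>)) * sgn u, L y)"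
    by (simp add: uv poincare_map_def Let_def L_def y_def)
  have "\<bar>fst (T z)\<bar> < U"
    using interval_invariant[OF pt(2,3,6)] by (simp add: Tz abs_mult abs_sgn_eq pt(1))
  have y: "norm (y - c\<^sub>0) < r / nQ" unfolding y_def by (rule centre_invariant[OF pt(2,3,7)])
  have "L y \<in> interior K"
  proof (cases "u > 0")
    case True
    have "r / nQ \<le> r" using K(4) by (simp add: divide_le_eq)
    then have "y \<in> ball c\<^sub>0 r" using y by (simp add: dist_norm norm_minus_commute)
    then show ?thesis using True interior_maximal[OF K(5)] by (auto simp: L_def)
  next
    case False
    have "norm (Q y - Q c\<^sub>0) \<le> nQ * norm (y - c\<^sub>0)"
      using norm_id_or_linear_le[OF Q_linear, of False "y - c\<^sub>0"] Q_linear by (simp add: linear_diff)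
    also have "\<dots> < nQ * (r / nQ)" using y by (intro mult_strict_left_mono) auto
    finally have "Q y \<in> ball (Q c\<^sub>0) r" by (simp add: dist_norm norm_minus_commute)
    then show ?thesis using False interior_maximal[OF K(6)] by (auto simp: L_def)
  qed
  with \<open>\<bar>fst (T z)\<bar> < U\<close> show ?thesis by (simp add: Tz interior_box abs_less_iff)
qed

lemma has_derivative_on_box:
  assumes z: "z \<in> section_box - Pi0"
  shows "(T has_derivative DT z) (at z)"
proof -
  obtain u v where uv: "z = (u, v)" by (cases z)
  note pt = box_point_estimates[OF z[unfolded uv]]
  show ?thesis unfolding uv
    by (rule poincare_map_has_derivative[where u = u and v = v and Q = Q and p = p and q = q
          and pu = pu and pv = pv and qu = qu and qv = qv and par = "(\<mu>, \<epsilon>)",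
          OF Q_linear pt(1) p_deriv[OF pt(2,4,5)] q_deriv[OF pt(2,4,5)]])
qed

lemma derivative_u_bounds:
  assumes z: "z \<in> section_box - Pi0"
  shows "fst (DT z (1, 0)) \<noteq> 0"
    and "1 / \<bar>fst (DT z (1, 0))\<bar> \<le> a"
    and "norm (snd (DT z (1, 0))) / \<bar>fst (DT z (1, 0))\<bar> \<le> c"
proof -
  obtain u v where uv: "z = (u, v)" by (cases z)
  define L where "L = (if u > 0 then id else Q)"
  note pt = box_point_estimates[OF z[unfolded uv], folded L_def]
  note DT = poincare_map_derivative_components[OF Q_linear, of A B pu pv qu qv \<mu> \<epsilon> u v, folded L_def]
  have fu: "1 \<le> a * \<bar>fst (DT z (1, 0))\<bar>"
    unfolding uv DT(1) by (rule expansion_bound[OF pt(2,3,10)])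
  then show fu_ne: "fst (DT z (1, 0)) \<noteq> 0" by auto
  with fu show "1 / \<bar>fst (DT z (1, 0))\<bar> \<le> a" by (simp add: divide_le_eq mult.commute)
  have "\<bar>sgn u\<bar> = 1" using pt(1) by (simp add: abs_sgn_eq)
  then have "norm ((sgn u * (1 - \<epsilon>) * \<bar>u\<bar> powr (- \<epsilon>)) *\<^sub>R B (\<mu>, \<epsilon>) + sgn u *\<^sub>R qu \<bar>u\<bar> (L v) (\<mu>, \<epsilon>))
      \<le> (1 - \<epsilon>) * \<bar>u\<bar> powr (- \<epsilon>) * norm (B (\<mu>, \<epsilon>)) + norm (qu \<bar>u\<bar> (L v) (\<mu>, \<epsilon>))"
    using norm_triangle_ineq[of "(sgn u * (1 - \<epsilon>) * \<bar>u\<bar> powr (- \<epsilon>)) *\<^sub>R B (\<mu>, \<epsilon>)"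
        "sgn u *\<^sub>R qu \<bar>u\<bar> (L v) (\<mu>, \<epsilon>)"] U(4)
    by (simp add: abs_mult)
  also have "\<dots> \<le> ((1 - \<epsilon>) * norm (B (\<mu>, \<epsilon>)) + \<eta>) * \<bar>u\<bar> powr (- \<epsilon>)"
    using pt(11) by (simp add: algebra_simps)
  finally have "norm (snd (DT z (1, 0))) \<le> nQ * (((1 - \<epsilon>) * norm (B (\<mu>, \<epsilon>)) + \<eta>) * \<bar>u\<bar> powr (- \<epsilon>))"
    unfolding uv DT(2) L_def by (rule order_trans[OF norm_id_or_linear_le[OF Q_linear] mult_left_mono]) simp
  then have "norm (snd (DT z (1, 0))) \<le> c * \<bar>fst (DT z (1, 0))\<bar>"
    unfolding uv DT(1) by (rule cross_u_bound[OF pt(2,3,10)])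
  with fu_ne show "norm (snd (DT z (1, 0))) / \<bar>fst (DT z (1, 0))\<bar> \<le> c"
    by (simp add: divide_le_eq)
qed

lemma derivative_v_bounds:
  assumes z: "z \<in> section_box - Pi0"
  shows "onorm (\<lambda>k. snd (DT z (0, k))) \<le> b"
    and "onorm (\<lambda>k. fst (DT z (0, k))) \<le> d"
proof -
  obtain u v where uv: "z = (u, v)" by (cases z)
  define L where "L = (if u > 0 then id else Q)"
  note pt = box_point_estimates[OF z[unfolded uv], folded L_def]
  note DT = poincare_map_derivative_components[OF Q_linear, of A B pu pv qu qv \<mu> \<epsilon> u v, folded L_def]
  have L_le: "norm (L k) \<le> nQ * norm k" for k unfolding L_def by (rule norm_id_or_linear_le[OF Q_linear])
  have \<eta>_nonneg: "0 \<le> \<eta> * \<bar>u\<bar> powr (1 - \<epsilon>)" using pt(9) by (meson norm_ge_zero order_trans)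
  have "onorm (\<lambda>k. snd (DT z (0, k))) \<le> nQ * (nQ * (\<eta> * \<bar>u\<bar> powr (1 - \<epsilon>)))"
  proof (rule onorm_le)
    fix k
    have "norm (snd (DT z (0, k))) \<le> nQ * norm (blinfun_apply (qv \<bar>u\<bar> (L v) (\<mu>, \<epsilon>)) (L k))"
      unfolding uv DT(4) by (rule L_le)
    also have "\<dots> \<le> nQ * (norm (qv \<bar>u\<bar> (L v) (\<mu>, \<epsilon>)) * norm (L k))"
      by (intro mult_left_mono norm_blinfun) auto
    also have "\<dots> \<le> nQ * ((\<eta> * \<bar>u\<bar> powr (1 - \<epsilon>)) * (nQ * norm k))"
      using pt(9) \<eta>_nonneg by (intro mult_left_mono mult_mono L_le) auto
    finally show "norm (snd (DT z (0, k))) \<le> nQ * (nQ * (\<eta> * \<bar>u\<bar> powr (1 - \<epsilon>))) * norm k"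
      by (simp add: algebra_simps)
  qed
  also have "\<dots> \<le> b" by (rule contraction_bound[OF pt(2,3)])
  finally show "onorm (\<lambda>k. snd (DT z (0, k))) \<le> b" .
  have "onorm (\<lambda>k. fst (DT z (0, k))) \<le> nQ * (\<eta> * \<bar>u\<bar> powr (1 - \<epsilon>))"
  proof (rule onorm_le)
    fix k
    have "\<bar>sgn u\<bar> = 1" using pt(1) by (simp add: abs_sgn_eq)
    then have "norm (fst (DT z (0, k))) \<le> norm (pv \<bar>u\<bar> (L v) (\<mu>, \<epsilon>)) * norm (L k)"
      unfolding uv DT(3) using norm_blinfun[of "pv \<bar>u\<bar> (L v) (\<mu>, \<epsilon>)" "L k"]
      by (simp add: abs_mult)
    also have "\<dots> \<le> (\<eta> * \<bar>u\<bar> powr (1 - \<epsilon>)) * (nQ * norm k)"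
      using pt(8) \<eta>_nonneg by (intro mult_mono L_le) auto
    finally show "norm (fst (DT z (0, k))) \<le> nQ * (\<eta> * \<bar>u\<bar> powr (1 - \<epsilon>)) * norm k"
      by (simp add: algebra_simps)
  qed
  also have "\<dots> \<le> d" by (rule cross_v_bound[OF pt(2,3)])
  finally show "onorm (\<lambda>k. fst (DT z (0, k))) \<le> d" .
qed

theorem lorenz_attractor:
  "lorenz_attractor {(u, v). \<bar>u\<bar> < \<delta> \<and> v \<in> W} T (\<mu>, vp (\<mu>, \<epsilon>)) (- \<mu>, Q (vp (\<mu>, \<epsilon>)))"
  unfolding lorenz_attractor_def
proof (intro conjI exI[of _ section_box])
  show "(\<mu>, vp (\<mu>, \<epsilon>)) \<in> {(u, v). \<bar>u\<bar> < \<delta> \<and> v \<in> W}"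
    and "(- \<mu>, Q (vp (\<mu>, \<epsilon>))) \<in> {(u, v). \<bar>u\<bar> < \<delta> \<and> v \<in> W}"
    using U vp_W Q_W by auto
  show "closed section_box" using K by (simp add: closed_Times)
  show "section_box \<subseteq> {(u, v). \<bar>u\<bar> < \<delta> \<and> v \<in> W}" using K U by auto
  show "interior section_box \<noteq> {}" using interior_K_nonempty U by (simp add: interior_box)
  show "connected (interior section_box)"
    unfolding interior_box using K by (intro convex_connected convex_Times) auto
  show "closure (interior section_box) = section_box" by (rule closure_interior_box)
  show "T ` (section_box - Pi0) \<subseteq> interior section_box" using maps_box_into_interior by blast
  show "\<exists>DT a b c d. a < 1 \<and> b < 1 \<and> c * d < (1 - a) * (1 - b) \<and>
      (\<forall>x \<in> section_box - Pi0. (T has_derivative DT x) (at x) \<and> fst (DT x (1, 0)) \<noteq> 0 \<and>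
         1 / \<bar>fst (DT x (1, 0))\<bar> \<le> a \<and> onorm (\<lambda>k. snd (DT x (0, k))) \<le> b \<and>
         norm (snd (DT x (1, 0))) / \<bar>fst (DT x (1, 0))\<bar> \<le> c \<and> onorm (\<lambda>k. fst (DT x (0, k))) \<le> d)"
    using hyperbolicity has_derivative_on_box derivative_u_bounds derivative_v_bounds by blast
qed

end

lemma expansion_margins:
  fixes a\<^sub>0 \<kappa> s :: real
  defines "\<kappa> \<equiv> (max 1 a\<^sub>0 + 2) / 2" and "s \<equiv> min (\<kappa> - 1) (1 - \<kappa> / 2) / 16"
  assumes a\<^sub>0: "0 < a\<^sub>0" "a\<^sub>0 < 2"
  shows "a\<^sub>0 < \<kappa>" "\<kappa> < 2" "0 < s" "s \<le> 1/32" "1 < \<kappa> * (1 - 4 * s)"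
    "- (\<kappa> / 2) + s + \<kappa> * (1 + s) * (1 + 2 * s) < 1" "\<kappa> / 2 + s < 1"
proof -
  show "a\<^sub>0 < \<kappa>" and \<kappa>2: "\<kappa> < 2" using a\<^sub>0 by (auto simp: \<kappa>_def max_def)
  have \<kappa>1: "1 < \<kappa>" using a\<^sub>0 by (auto simp: \<kappa>_def max_def)
  show s0: "0 < s" using \<kappa>1 \<kappa>2 by (auto simp: s_def)
  have s16: "16 * s \<le> \<kappa> - 1" "16 * s \<le> 1 - \<kappa> / 2" by (auto simp: s_def)
  then show s1: "s \<le> 1/32" using \<kappa>1 by linarith
  have \<kappa>s: "\<kappa> * s \<le> 2 * s" using \<kappa>2 s0 by (intro mult_right_mono) auto
  moreover have "\<kappa> * (1 - 4 * s) = \<kappa> - 4 * (\<kappa> * s)" by (simp add: algebra_simps)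
  ultimately show "1 < \<kappa> * (1 - 4 * s)" using s16 s0 by linarith
  have "\<kappa> * (s * s) \<le> 2 * (s * (1/32))" using \<kappa>2 s0 s1
    by (intro mult_mono) (auto intro: mult_left_mono)
  moreover have "\<kappa> * (1 + s) * (1 + 2 * s) = \<kappa> + 3 * (\<kappa> * s) + 2 * (\<kappa> * (s * s))"
    by (simp add: algebra_simps)
  ultimately show "- (\<kappa> / 2) + s + \<kappa> * (1 + s) * (1 + 2 * s) < 1" using \<kappa>s s16 s0 by linarith
  show "\<kappa> / 2 + s < 1" using s16 s0 by linarith
qed

lemma interval_image_bound:
  fixes M a t P \<eta> U Y \<kappa> s :: real
  assumes t: "0 \<le> t" "t \<le> U * Y" and P: "\<bar>P\<bar> \<le> \<eta> * t" and \<eta>: "0 \<le> \<eta>" "\<eta> \<le> a"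
    and aY: "\<eta> * Y \<le> 2 * s * (a * Y)" "a * Y < \<kappa> * (1 + s)"
    and M: "- (\<kappa> / 2 + s) * U < M" "M < (- (\<kappa> / 2) + s) * U"
    and U: "0 < U" and s: "0 \<le> s"
    and margins: "- (\<kappa> / 2) + s + \<kappa> * (1 + s) * (1 + 2 * s) < 1" "\<kappa> / 2 + s < 1"
  shows "\<bar>M + a * t + P\<bar> < U"
proof -
  have "M + a * t + P \<le> M + (a + \<eta>) * (U * Y)"
    using P t \<eta> mult_left_mono[OF t(2), of "a + \<eta>"] by (simp add: algebra_simps)
  also have "\<dots> \<le> M + U * (a * Y * (1 + 2 * s))"
    using aY U by (simp add: algebra_simps)
  also have "\<dots> \<le> M + U * (\<kappa> * (1 + s) * (1 + 2 * s))"
    using aY s U by (intro add_left_mono mult_left_mono mult_right_mono) auto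
  also have "\<dots> < U * (- (\<kappa> / 2) + s + \<kappa> * (1 + s) * (1 + 2 * s))"
    using M(2) by (simp add: algebra_simps)
  also have "\<dots> < U" using margins U by (simp add: mult_less_cancel_left1)
  finally have upper: "M + a * t + P < U" .
  have "0 \<le> (a - \<eta>) * t" using \<eta> t by simp
  then have "M \<le> M + a * t + P" using P by (simp add: algebra_simps)
  moreover have "(\<kappa> / 2 + s) * U \<le> 1 * U" using margins U by (intro mult_right_mono) auto
  then have "- U \<le> - (\<kappa> / 2 + s) * U" unfolding mult_minus_left by linarith
  ultimately show ?thesis using upper M by linarith
qed

lemma abs_add_lower_bound:
  fixes A P \<nu> z \<eta> :: real
  assumes "0 \<le> \<nu>" "0 < z" "\<bar>P\<bar> \<le> \<eta> * z"
  shows "(\<bar>A\<bar> * \<nu> - \<eta>) * z \<le> \<bar>A * \<nu> * z + P\<bar>"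
proof -
  have "\<bar>A * \<nu> * z\<bar> = \<bar>A\<bar> * \<nu> * z" using assms by (simp add: abs_mult)
  then show ?thesis using assms by (simp add: algebra_simps)
qed

lemma expansion_rate_bound:
  fixes A P \<nu> z \<eta> Y s \<kappa> :: real
  assumes \<nu>: "0 \<le> \<nu>" "1 - s \<le> \<nu>" and z: "0 < z" "Y \<le> z" and P: "\<bar>P\<bar> \<le> \<eta> * z"
    and AY: "\<kappa> * (1 - s) < \<bar>A\<bar> * Y" "\<eta> * Y \<le> 2 * s * (\<bar>A\<bar> * Y)"
    and \<eta>: "\<eta> \<le> \<bar>A\<bar> * \<nu>" and s: "0 \<le> s" "s \<le> 1/32" and \<kappa>: "1 < \<kappa> * (1 - 4 * s)"
  shows "1 \<le> 1 / (\<kappa> * (1 - 4 * s)) * \<bar>A * \<nu> * z + P\<bar>"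
proof -
  have "0 < \<kappa> * (1 - 4 * s)" using \<kappa> by linarith
  then have \<kappa>0: "0 < \<kappa>" using s by (simp add: zero_less_mult_iff)
  have "0 < \<kappa> * (1 - s)" using \<kappa>0 s by simp
  then have X0: "0 \<le> \<bar>A\<bar> * Y" using AY(1) by linarith
  have "\<kappa> * (1 - 4 * s) \<le> \<kappa> * (1 - s) * (1 - 3 * s)"
    using \<kappa>0 s by (simp add: algebra_simps)
  also have "\<dots> \<le> \<bar>A\<bar> * Y * (1 - 3 * s)"
    using AY(1) \<kappa> s \<kappa>0 by (intro mult_right_mono) (auto simp: algebra_simps)
  also have "\<dots> \<le> \<bar>A\<bar> * Y * \<nu> - \<eta> * Y"
    using AY(2) X0 mult_left_mono[OF \<nu>(2) X0] by (simp add: algebra_simps)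
  also have "\<dots> = (\<bar>A\<bar> * \<nu> - \<eta>) * Y" by (simp add: algebra_simps)
  also have "\<dots> \<le> (\<bar>A\<bar> * \<nu> - \<eta>) * z" using \<eta> z by (intro mult_left_mono) auto
  also have "\<dots> \<le> \<bar>A * \<nu> * z + P\<bar>" by (rule abs_add_lower_bound[OF \<nu>(1) z(1) P])
  finally show ?thesis using \<kappa> by (simp add: divide_simps)
qed

lemma cone_ratio_bound:
  fixes A P \<nu> z \<eta> G n\<^sub>Q b b\<^sub>0 a\<^sub>0 :: real
  assumes \<nu>: "0 \<le> \<nu>" "\<nu> \<le> 1" and z: "0 < z" and P: "\<bar>P\<bar> \<le> \<eta> * z"
    and \<eta>: "0 \<le> \<eta>" "\<eta> \<le> 1" "a\<^sub>0 / 8 \<le> \<bar>A\<bar> * \<nu> - \<eta>" and a\<^sub>0: "0 < a\<^sub>0"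
    and n\<^sub>Q: "1 \<le> n\<^sub>Q" and b: "0 \<le> b" "b \<le> b\<^sub>0 + 1"
    and G: "G \<le> n\<^sub>Q * ((\<nu> * b + \<eta>) * z)"
  shows "G \<le> 8 * n\<^sub>Q * (b\<^sub>0 + 2) / a\<^sub>0 * \<bar>A * \<nu> * z + P\<bar>"
proof -
  have c: "0 \<le> 8 * n\<^sub>Q * (b\<^sub>0 + 2) / a\<^sub>0" using n\<^sub>Q a\<^sub>0 b by simp
  have "\<nu> * b \<le> b" using \<nu> b by (simp add: mult_left_le_one_le)
  then have "(\<nu> * b + \<eta>) * z \<le> (b\<^sub>0 + 2) * z" using b \<eta> z by (intro mult_right_mono) auto
  then have "G \<le> n\<^sub>Q * ((b\<^sub>0 + 2) * z)" using G n\<^sub>Q by (meson order_trans mult_left_mono zero_le_one)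
  also have "\<dots> = 8 * n\<^sub>Q * (b\<^sub>0 + 2) / a\<^sub>0 * (a\<^sub>0 / 8 * z)" using a\<^sub>0 by simp
  also have "\<dots> \<le> 8 * n\<^sub>Q * (b\<^sub>0 + 2) / a\<^sub>0 * ((\<bar>A\<bar> * \<nu> - \<eta>) * z)"
    using \<eta> z c by (intro mult_left_mono mult_right_mono) auto
  also have "\<dots> \<le> 8 * n\<^sub>Q * (b\<^sub>0 + 2) / a\<^sub>0 * \<bar>A * \<nu> * z + P\<bar>"
    using c by (intro mult_left_mono abs_add_lower_bound[OF \<nu>(1) z P])
  finally show ?thesis .
qed

lemma small_scale_with_exponent:
  fixes y e b :: real
  assumes "1 < y" "0 < e" "0 < b"
  obtains U \<epsilon> where "0 < U" "U < b" "0 < \<epsilon>" "\<epsilon> < e" "U powr (- \<epsilon>) = y"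
proof -
  define U where "U = min (b / 2) (min (1 / 2) (exp (- ln y / e) / 2))"
  have "U \<le> b / 2" "U \<le> 1 / 2" "U \<le> exp (- ln y / e) / 2" by (simp_all add: U_def)
  moreover have "0 < U" using assms by (simp add: U_def)
  moreover have "0 < exp (- ln y / e)" by simp
  ultimately have U: "0 < U" "U < b" "U < 1" "U < exp (- ln y / e)" using assms by linarith+
  have "ln U < ln (exp (- ln y / e))" using U by (subst ln_less_cancel_iff) auto
  then have lnU: "ln U < 0" "ln U < - ln y / e" using U by auto
  define \<epsilon> where "\<epsilon> = ln y / - ln U"
  have ly: "0 < ln y" using assms by simp
  show thesis
  proof (rule that[OF U(1,2)])
    show "0 < \<epsilon>" using divide_pos_neg[OF ly lnU(1)] by (simp add: \<epsilon>_def)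
    have "ln y < e * - ln U" using lnU assms by (simp add: field_simps)
    moreover have "0 < - ln U" using lnU by simp
    ultimately show "\<epsilon> < e" unfolding \<epsilon>_def by (simp only: pos_divide_less_eq)
    have "U powr (- \<epsilon>) = exp (ln y)" using U lnU by (simp add: powr_def \<epsilon>_def)
    then show "U powr (- \<epsilon>) = y" using assms by simp
  qed
qed

lemma convex_closed_neighbourhood_of_two_points:
  fixes W :: "'a::euclidean_space set"
  assumes "open W" "convex W" "a \<in> W" "b \<in> W"
  obtains r K where "0 < r" "closed K" "convex K" "K \<subseteq> W" "ball a r \<subseteq> K" "ball b r \<subseteq> K"
proof -
  have seg: "compact (closed_segment a b)" "closed_segment a b \<subseteq> W"
    using assms by (auto simp: closed_segment_subset)
  obtain r where r: "0 < r" "(\<Union>x\<in>closed_segment a b. cball x r) \<subseteq> W"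
    using compact_subset_open_imp_cball_epsilon_subset[OF seg(1) assms(1) seg(2)] by blast
  define K where "K = (\<Union>x\<in>closed_segment a b. \<Union>y\<in>cball 0 r. {x + y})"
  have ball: "ball x r \<subseteq> K" if "x \<in> closed_segment a b" for x
  proof
    fix z assume "z \<in> ball x r"
    then have "z - x \<in> cball 0 r" by (simp add: dist_norm norm_minus_commute)
    then show "z \<in> K" unfolding K_def using that by (intro UN_I[of x] UN_I[of "z - x"]) auto
  qed
  show thesis
  proof (rule that[OF r(1)])
    show "closed K" unfolding K_def by (intro compact_imp_closed compact_sums') auto
    show "convex K" unfolding K_def by (intro convex_sums) auto
    show "K \<subseteq> W" using r(2) by (force simp: K_def dist_norm)
    show "ball a r \<subseteq> K" "ball b r \<subseteq> K" using ball by auto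
  qed
qed

section \<open>Choice of the parameter region\<close>

locale butterfly_unfolding =
  fixes Q :: "'v::euclidean_space \<Rightarrow> 'v" and W :: "'v set" and \<delta> :: real
    and A :: "real \<times> real \<Rightarrow> real" and B vp :: "real \<times> real \<Rightarrow> 'v"
    and p pu :: "real \<Rightarrow> 'v \<Rightarrow> real \<times> real \<Rightarrow> real"
    and q qu :: "real \<Rightarrow> 'v \<Rightarrow> real \<times> real \<Rightarrow> 'v"
    and pv :: "real \<Rightarrow> 'v \<Rightarrow> real \<times> real \<Rightarrow> ('v \<Rightarrow>\<^sub>L real)"
    and qv :: "real \<Rightarrow> 'v \<Rightarrow> real \<times> real \<Rightarrow> ('v \<Rightarrow>\<^sub>L 'v)"
  assumes Q_lin: "linear Q"
    and W_open: "open W" and W_convex: "convex W" and W_sym: "Q ` W = W"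
    and vp_W: "vp (0, 0) \<in> W"
    and \<delta>_pos: "\<delta> > 0"
    and A_cont: "continuous_on UNIV A"
    and B_cont: "continuous_on UNIV B"
    and vp_cont: "continuous_on UNIV vp"
    and A_sep: "0 < \<bar>A (0, 0)\<bar>" "\<bar>A (0, 0)\<bar> < 2"
    and p_deriv: "\<And>\<mu> \<epsilon> x v. \<bar>\<mu>\<bar> < \<delta> \<Longrightarrow> \<bar>\<epsilon>\<bar> < \<delta> \<Longrightarrow> 0 < x \<Longrightarrow> x < \<delta> \<Longrightarrow> v \<in> W \<Longrightarrow>
        ((\<lambda>(y, w). p y w (\<mu>, \<epsilon>)) has_derivative
           (\<lambda>(h, k). h * pu x v (\<mu>, \<epsilon>) + blinfun_apply (pv x v (\<mu>, \<epsilon>)) k)) (at (x, v))"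
    and q_deriv: "\<And>\<mu> \<epsilon> x v. \<bar>\<mu>\<bar> < \<delta> \<Longrightarrow> \<bar>\<epsilon>\<bar> < \<delta> \<Longrightarrow> 0 < x \<Longrightarrow> x < \<delta> \<Longrightarrow> v \<in> W \<Longrightarrow>
        ((\<lambda>(y, w). q y w (\<mu>, \<epsilon>)) has_derivative
           (\<lambda>(h, k). h *\<^sub>R qu x v (\<mu>, \<epsilon>) + blinfun_apply (qv x v (\<mu>, \<epsilon>)) k)) (at (x, v))"
    and small: "\<And>\<eta>. \<eta> > 0 \<Longrightarrow> \<exists>\<rho>>0. \<forall>\<mu> \<epsilon> x v.
        \<bar>\<mu>\<bar> < \<rho> \<and> \<bar>\<epsilon>\<bar> < \<rho> \<and> 0 < x \<and> x < \<rho> \<and> v \<in> W \<longrightarrow>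
          \<bar>p x v (\<mu>, \<epsilon>)\<bar> \<le> \<eta> * x powr (1 - \<epsilon>) \<and>
          norm (q x v (\<mu>, \<epsilon>)) \<le> \<eta> * x powr (1 - \<epsilon>) \<and>
          norm (pv x v (\<mu>, \<epsilon>)) \<le> \<eta> * x powr (1 - \<epsilon>) \<and>
          norm (qv x v (\<mu>, \<epsilon>)) \<le> \<eta> * x powr (1 - \<epsilon>) \<and>
          \<bar>pu x v (\<mu>, \<epsilon>)\<bar> \<le> \<eta> * x powr (- \<epsilon>) \<and>
          norm (qu x v (\<mu>, \<epsilon>)) \<le> \<eta> * x powr (- \<epsilon>)"
begin

abbreviation "a\<^sub>0 \<equiv> \<bar>A (0, 0)\<bar>"
abbreviation "\<sigma> \<equiv> sgn (A (0, 0))"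
abbreviation "n\<^sub>Q \<equiv> max 1 (onorm Q)"
abbreviation "n\<^sub>B \<equiv> norm (B (0, 0))"
abbreviation "v\<^sub>0 \<equiv> vp (0, 0)"

end

text \<open>\<open>\<kappa>\<close> is the target expansion \<open>\<bar>A\<bar> U\<^sup>-\<^sup>\<epsilon>\<close> of the one-dimensional map across a box of
  half-width \<open>U\<close>, and \<open>s\<close> the relative tolerance; \<open>\<rho>\<close> makes the remainders \<open>\<eta>\<close>-small,
  \<open>\<beta>\<close> keeps \<open>A, B, v\<^sub>+\<close> close to their values at the origin, and \<open>K\<close> is the
  \<open>v\<close>-part of the box.\<close>

locale unfolding_constants = butterfly_unfolding +
  fixes \<kappa> s \<eta> \<rho> \<beta> r :: real and K :: "'a set"
  assumes margins: "a\<^sub>0 < \<kappa>" "\<kappa> < 2" "0 < s" "s \<le> 1/32" "1 < \<kappa> * (1 - 4 * s)"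
      "- (\<kappa> / 2) + s + \<kappa> * (1 + s) * (1 + 2 * s) < 1" "\<kappa> / 2 + s < 1"
    and \<eta>: "0 < \<eta>" "\<eta> \<le> s * a\<^sub>0" "\<eta> \<le> 1 / (2 * n\<^sub>Q * n\<^sub>Q)"
      "\<eta> \<le> (1 - 1 / (\<kappa> * (1 - 4 * s))) * a\<^sub>0 / (32 * n\<^sub>Q * n\<^sub>Q * (n\<^sub>B + 2))"
    and \<rho>: "0 < \<rho>" "\<rho> \<le> \<delta>" "\<rho> \<le> 1" "\<rho> \<le> s"
    and remainders: "\<And>\<mu> \<epsilon> x v. \<bar>\<mu>\<bar> < \<rho> \<Longrightarrow> \<bar>\<epsilon>\<bar> < \<rho> \<Longrightarrow> 0 < x \<Longrightarrow> x < \<rho> \<Longrightarrow> v \<in> W \<Longrightarrow>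
          \<bar>p x v (\<mu>, \<epsilon>)\<bar> \<le> \<eta> * x powr (1 - \<epsilon>) \<and>
          norm (q x v (\<mu>, \<epsilon>)) \<le> \<eta> * x powr (1 - \<epsilon>) \<and>
          norm (pv x v (\<mu>, \<epsilon>)) \<le> \<eta> * x powr (1 - \<epsilon>) \<and>
          norm (qv x v (\<mu>, \<epsilon>)) \<le> \<eta> * x powr (1 - \<epsilon>) \<and>
          \<bar>pu x v (\<mu>, \<epsilon>)\<bar> \<le> \<eta> * x powr (- \<epsilon>) \<and>
          norm (qu x v (\<mu>, \<epsilon>)) \<le> \<eta> * x powr (- \<epsilon>)"
    and \<beta>: "0 < \<beta>" "\<And>z. norm z < \<beta> \<Longrightarrow> \<bar>A z - A (0, 0)\<bar> < s * a\<^sub>0 / 2"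
      "\<And>z. norm z < \<beta> \<Longrightarrow> norm (B z - B (0, 0)) < 1"
      "\<And>z. norm z < \<beta> \<Longrightarrow> norm (vp z - v\<^sub>0) < r / (2 * n\<^sub>Q)"
    and K: "0 < r" "closed K" "convex K" "K \<subseteq> W" "ball v\<^sub>0 r \<subseteq> K" "ball (Q v\<^sub>0) r \<subseteq> K"
begin

lemma hyperbolicity_constants:
  "1 / (\<kappa> * (1 - 4 * s)) < 1" "n\<^sub>Q * n\<^sub>Q * \<eta> < 1"
  "8 * n\<^sub>Q * (n\<^sub>B + 2) / a\<^sub>0 * (n\<^sub>Q * \<eta>) < (1 - 1 / (\<kappa> * (1 - 4 * s))) * (1 - n\<^sub>Q * n\<^sub>Q * \<eta>)"
proof -
  show a: "1 / (\<kappa> * (1 - 4 * s)) < 1" using margins by simp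
  have "n\<^sub>Q * n\<^sub>Q * \<eta> \<le> 1 / 2" using \<eta>(3) by (simp add: field_simps)
  then show "n\<^sub>Q * n\<^sub>Q * \<eta> < 1" by linarith
  have pos: "0 < n\<^sub>Q * n\<^sub>Q * (n\<^sub>B + 2)" by (simp add: add_nonneg_pos)
  have "8 * n\<^sub>Q * (n\<^sub>B + 2) / a\<^sub>0 * (n\<^sub>Q * \<eta>) = 8 * (n\<^sub>Q * n\<^sub>Q * (n\<^sub>B + 2)) / a\<^sub>0 * \<eta>"
    by (simp add: algebra_simps)
  also have "\<dots> \<le> 8 * (n\<^sub>Q * n\<^sub>Q * (n\<^sub>B + 2)) / a\<^sub>0
      * ((1 - 1 / (\<kappa> * (1 - 4 * s))) * a\<^sub>0 / (32 * (n\<^sub>Q * n\<^sub>Q * (n\<^sub>B + 2))))"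
    using \<eta>(4) pos A_sep by (intro mult_left_mono) (auto simp: mult.assoc)
  also have "\<dots> = (1 - 1 / (\<kappa> * (1 - 4 * s))) * (1 / 4)"
  proof -
    have gen: "8 * k / a * (t * a / (32 * k)) = t * (1 / 4)" if "k \<noteq> 0" "a \<noteq> 0" for k t a :: real
      using that by (simp add: field_simps)
    show ?thesis by (rule gen) (use pos A_sep in auto)
  qed
  also have "\<dots> < (1 - 1 / (\<kappa> * (1 - 4 * s))) * (1 - n\<^sub>Q * n\<^sub>Q * \<eta>)"
    using a \<open>n\<^sub>Q * n\<^sub>Q * \<eta> \<le> 1 / 2\<close> by (intro mult_strict_left_mono) auto
  finally show "8 * n\<^sub>Q * (n\<^sub>B + 2) / a\<^sub>0 * (n\<^sub>Q * \<eta>)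
      < (1 - 1 / (\<kappa> * (1 - 4 * s))) * (1 - n\<^sub>Q * n\<^sub>Q * \<eta>)" .
qed

lemma \<eta>_small: "\<eta> \<le> a\<^sub>0 / 32" "\<eta> \<le> 1"
proof -
  have "s * a\<^sub>0 \<le> 1 / 32 * a\<^sub>0" using margins by (intro mult_right_mono) auto
  then show "\<eta> \<le> a\<^sub>0 / 32" using \<eta>(2) by linarith
  then show "\<eta> \<le> 1" using A_sep by linarith
qed

lemma A_near_origin:
  assumes "norm z < \<beta>"
  shows "a\<^sub>0 / 2 < \<bar>A z\<bar>" "\<sigma> * A z = \<bar>A z\<bar>" "\<bar>\<bar>A z\<bar> - a\<^sub>0\<bar> < s * a\<^sub>0 / 2"
proof -
  have close: "\<bar>A z - A (0, 0)\<bar> < s * a\<^sub>0 / 2" by (rule \<beta>(2)[OF assms])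
  then show "\<bar>\<bar>A z\<bar> - a\<^sub>0\<bar> < s * a\<^sub>0 / 2" using abs_triangle_ineq3 order_le_less_trans by blast
  have "s * a\<^sub>0 \<le> a\<^sub>0" using margins A_sep by (simp add: mult_left_le_one_le)
  then have "\<bar>A z - A (0, 0)\<bar> < a\<^sub>0 / 2" using close by linarith
  then show "a\<^sub>0 / 2 < \<bar>A z\<bar>" "\<sigma> * A z = \<bar>A z\<bar>"
    using A_sep by (cases "A (0, 0) > 0"; auto simp: abs_if sgn_if split: if_splits)+
qed

text \<open>Parameters for which the box of half-width \<open>U\<close> works: the expansion \<open>\<bar>A\<bar> U\<^sup>-\<^sup>\<epsilon>\<close> is within
  a factor \<open>1 \<plusminus> s\<close> of \<open>\<kappa>\<close>, the image \<open>\<mu> + A \<bar>u\<bar>\<^sup>1\<^sup>-\<^sup>\<epsilon>\<close> of \<open>[-U, U]\<close> is roughly centred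
  (\<open>sgn A \<mu> \<approx> -\<kappa> U / 2\<close>), and the \<open>v\<close>-image stays near \<open>v\<^sub>+\<close>.\<close>

definition cell :: "real \<Rightarrow> (real \<times> real) set" where
  "cell U = {z. 0 < snd z \<and> snd z < \<rho> \<and> \<bar>fst z\<bar> < \<rho> \<and> norm z < \<beta> \<and>
     \<kappa> * (1 - s) < \<bar>A z\<bar> * U powr (- snd z) \<and> \<bar>A z\<bar> * U powr (- snd z) < \<kappa> * (1 + s) \<and>
     - (\<kappa> / 2 + s) < \<sigma> * fst z / U \<and> \<sigma> * fst z / U < - (\<kappa> / 2) + s \<and>
     norm (vp z - v\<^sub>0) + U powr (1 - snd z) * (norm (B z) + \<eta>) < r / n\<^sub>Q}"

lemma open_cell: "0 < U \<Longrightarrow> open (cell U)"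
  unfolding cell_def
  by (intro open_Collect_conj open_Collect_less continuous_intros A_cont B_cont vp_cont) auto

lemma mem_cellD:
  assumes "(\<mu>, \<epsilon>) \<in> cell U"
  shows "\<kappa> * (1 - s) < \<bar>A (\<mu>, \<epsilon>)\<bar> * U powr (- \<epsilon>)" "\<bar>A (\<mu>, \<epsilon>)\<bar> * U powr (- \<epsilon>) < \<kappa> * (1 + s)"
    "- (\<kappa> / 2 + s) < \<sigma> * \<mu> / U" "\<sigma> * \<mu> / U < - (\<kappa> / 2) + s"
    "norm (vp (\<mu>, \<epsilon>) - v\<^sub>0) + U powr (1 - \<epsilon>) * (norm (B (\<mu>, \<epsilon>)) + \<eta>) < r / n\<^sub>Q"
  using assms by (auto simp: cell_def)

lemma cell_bounds:
  assumes U: "0 < U" "U < \<rho>" and z: "(\<mu>, \<epsilon>) \<in> cell U"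
  shows "0 < \<epsilon>" "\<epsilon> \<le> s" "\<epsilon> < 1" "\<bar>\<mu>\<bar> < \<rho>" "\<bar>\<epsilon>\<bar> < \<rho>" "norm (\<mu>, \<epsilon>) < \<beta>"
    "\<sigma> * A (\<mu>, \<epsilon>) = \<bar>A (\<mu>, \<epsilon>)\<bar>" "\<eta> \<le> \<bar>A (\<mu>, \<epsilon>)\<bar> * (1 - \<epsilon>)"
    "a\<^sub>0 / 8 \<le> \<bar>A (\<mu>, \<epsilon>)\<bar> * (1 - \<epsilon>) - \<eta>"
    "\<eta> * U powr (- \<epsilon>) \<le> 2 * s * (\<bar>A (\<mu>, \<epsilon>)\<bar> * U powr (- \<epsilon>))"
    "norm (B (\<mu>, \<epsilon>)) \<le> n\<^sub>B + 1"
proof -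
  show \<epsilon>: "0 < \<epsilon>" "\<epsilon> \<le> s" "\<bar>\<mu>\<bar> < \<rho>" "\<bar>\<epsilon>\<bar> < \<rho>" and \<beta>z: "norm (\<mu>, \<epsilon>) < \<beta>"
    using z \<rho> by (auto simp: cell_def)
  show "\<epsilon> < 1" using \<epsilon>(2) margins(4) by linarith
  note A = A_near_origin[OF \<beta>z]
  show "\<sigma> * A (\<mu>, \<epsilon>) = \<bar>A (\<mu>, \<epsilon>)\<bar>" by (rule A(2))
  have "\<bar>A (\<mu>, \<epsilon>)\<bar> * (1 / 2) \<le> \<bar>A (\<mu>, \<epsilon>)\<bar> * (1 - \<epsilon>)"
    using \<epsilon> margins by (intro mult_left_mono) auto
  moreover note \<eta>_small(1)
  ultimately show "\<eta> \<le> \<bar>A (\<mu>, \<epsilon>)\<bar> * (1 - \<epsilon>)" "a\<^sub>0 / 8 \<le> \<bar>A (\<mu>, \<epsilon>)\<bar> * (1 - \<epsilon>) - \<eta>"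
    using A(1) A_sep by linarith+
  have "s * a\<^sub>0 \<le> s * (2 * \<bar>A (\<mu>, \<epsilon>)\<bar>)" using A(1) margins by (intro mult_left_mono) auto
  then have \<eta>A: "\<eta> \<le> s * (2 * \<bar>A (\<mu>, \<epsilon>)\<bar>)" using \<eta>(2) by linarith
  show "\<eta> * U powr (- \<epsilon>) \<le> 2 * s * (\<bar>A (\<mu>, \<epsilon>)\<bar> * U powr (- \<epsilon>))"
    using mult_right_mono[OF \<eta>A powr_ge_zero[of U "- \<epsilon>"]] by (simp add: algebra_simps)
  show "norm (B (\<mu>, \<epsilon>)) \<le> n\<^sub>B + 1"
    using \<beta>(3)[OF \<beta>z] norm_triangle_ineq2[of "B (\<mu>, \<epsilon>)" "B (0, 0)"] by linarith
qed

lemma cell_interval_invariant: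
  assumes U: "0 < U" "U < \<rho>" and z: "(\<mu>, \<epsilon>) \<in> cell U"
    and x: "0 < x" "x \<le> U" and P: "\<bar>P\<bar> \<le> \<eta> * x powr (1 - \<epsilon>)"
  shows "\<bar>\<mu> + A (\<mu>, \<epsilon>) * x powr (1 - \<epsilon>) + P\<bar> < U"
proof -
  note c = cell_bounds[OF U z]
  have \<sigma>: "\<sigma> * \<sigma> = 1" "\<bar>\<sigma>\<bar> = 1" using A_sep by (auto simp: sgn_if)
  have \<sigma>A: "\<sigma> * \<bar>A (\<mu>, \<epsilon>)\<bar> = A (\<mu>, \<epsilon>)"
    by (simp only: c(7)[symmetric] mult.assoc[symmetric] \<sigma>(1) mult_1)
  have "\<sigma> * (\<sigma> * \<mu> + \<bar>A (\<mu>, \<epsilon>)\<bar> * x powr (1 - \<epsilon>) + \<sigma> * P)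
      = (\<sigma> * \<sigma>) * \<mu> + (\<sigma> * \<bar>A (\<mu>, \<epsilon>)\<bar>) * x powr (1 - \<epsilon>) + (\<sigma> * \<sigma>) * P"
    by (simp only: distrib_left mult.assoc)
  then have "\<mu> + A (\<mu>, \<epsilon>) * x powr (1 - \<epsilon>) + P
      = \<sigma> * (\<sigma> * \<mu> + \<bar>A (\<mu>, \<epsilon>)\<bar> * x powr (1 - \<epsilon>) + \<sigma> * P)"
    by (simp only: \<sigma>(1) \<sigma>A mult_1)
  then have eq: "\<bar>\<mu> + A (\<mu>, \<epsilon>) * x powr (1 - \<epsilon>) + P\<bar>
      = \<bar>\<sigma> * \<mu> + \<bar>A (\<mu>, \<epsilon>)\<bar> * x powr (1 - \<epsilon>) + \<sigma> * P\<bar>"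
    using \<sigma>(2) by (simp add: abs_mult)
  have "x powr (1 - \<epsilon>) \<le> U powr (1 - \<epsilon>)" using x c(3) by (intro powr_mono2) auto
  also have "\<dots> = U * U powr (- \<epsilon>)" using U powr_add[of U 1 "- \<epsilon>"] by simp
  finally have t: "x powr (1 - \<epsilon>) \<le> U * U powr (- \<epsilon>)" .
  have "- (\<kappa> / 2 + s) < \<sigma> * \<mu> / U" "\<sigma> * \<mu> / U < - (\<kappa> / 2) + s" using mem_cellD[OF z] by simp_all
  then have M: "- (\<kappa> / 2 + s) * U < \<sigma> * \<mu>" "\<sigma> * \<mu> < (- (\<kappa> / 2) + s) * U"
    by (simp_all only: pos_less_divide_eq[OF U(1)] pos_divide_less_eq[OF U(1)])
  note AY = mem_cellD(2)[OF z]
  have "\<bar>\<sigma> * P\<bar> \<le> \<eta> * x powr (1 - \<epsilon>)" using P \<sigma>(2) by (simp add: abs_mult)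
  moreover have "\<bar>A (\<mu>, \<epsilon>)\<bar> * (1 - \<epsilon>) \<le> \<bar>A (\<mu>, \<epsilon>)\<bar>" using c(1) by (simp add: mult_left_le)
  then have "\<eta> \<le> \<bar>A (\<mu>, \<epsilon>)\<bar>" using c(8) by linarith
  ultimately show ?thesis unfolding eq
    by (rule interval_image_bound[OF powr_ge_zero t _ less_imp_le[OF \<eta>(1)] _ c(10) AY M U(1)
        less_imp_le[OF margins(3)] margins(6,7)])
qed

lemma cell_centre_invariant:
  assumes U: "0 < U" "U < \<rho>" and z: "(\<mu>, \<epsilon>) \<in> cell U"
    and x: "0 < x" "x \<le> U" and w: "norm w \<le> \<eta> * x powr (1 - \<epsilon>)"
  shows "norm (vp (\<mu>, \<epsilon>) + x powr (1 - \<epsilon>) *\<^sub>R B (\<mu>, \<epsilon>) + w - v\<^sub>0) < r / n\<^sub>Q"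
proof -
  note c = cell_bounds[OF U z]
  have eq: "vp (\<mu>, \<epsilon>) + x powr (1 - \<epsilon>) *\<^sub>R B (\<mu>, \<epsilon>) + w - v\<^sub>0
      = (vp (\<mu>, \<epsilon>) - v\<^sub>0) + x powr (1 - \<epsilon>) *\<^sub>R B (\<mu>, \<epsilon>) + w" by (simp add: algebra_simps)
  have "norm (vp (\<mu>, \<epsilon>) + x powr (1 - \<epsilon>) *\<^sub>R B (\<mu>, \<epsilon>) + w - v\<^sub>0)
      \<le> norm ((vp (\<mu>, \<epsilon>) - v\<^sub>0) + x powr (1 - \<epsilon>) *\<^sub>R B (\<mu>, \<epsilon>)) + norm w"
    unfolding eq by (rule norm_triangle_ineq)
  also have "\<dots> \<le> norm (vp (\<mu>, \<epsilon>) - v\<^sub>0) + norm (x powr (1 - \<epsilon>) *\<^sub>R B (\<mu>, \<epsilon>)) + norm w"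
    by (rule add_right_mono[OF norm_triangle_ineq])
  also have "\<dots> \<le> norm (vp (\<mu>, \<epsilon>) - v\<^sub>0) + x powr (1 - \<epsilon>) * (norm (B (\<mu>, \<epsilon>)) + \<eta>)"
  proof -
    have "norm (x powr (1 - \<epsilon>) *\<^sub>R B (\<mu>, \<epsilon>)) = x powr (1 - \<epsilon>) * norm (B (\<mu>, \<epsilon>))"
      by (simp only: norm_scaleR abs_of_nonneg[OF powr_ge_zero])
    then show ?thesis using w by (simp only: distrib_left mult.commute[of \<eta>])
  qed
  also have "\<dots> \<le> norm (vp (\<mu>, \<epsilon>) - v\<^sub>0) + U powr (1 - \<epsilon>) * (norm (B (\<mu>, \<epsilon>)) + \<eta>)"
  proof -
    have "x powr (1 - \<epsilon>) \<le> U powr (1 - \<epsilon>)" using x c(3) by (intro powr_mono2) auto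
    then show ?thesis using \<eta>(1) by (intro add_left_mono mult_right_mono) auto
  qed
  also have "\<dots> < r / n\<^sub>Q" by (rule mem_cellD(5)[OF z])
  finally show ?thesis .
qed

lemma cell_expansion:
  assumes U: "0 < U" "U < \<rho>" and z: "(\<mu>, \<epsilon>) \<in> cell U"
    and x: "0 < x" "x \<le> U" and P: "\<bar>P\<bar> \<le> \<eta> * x powr (- \<epsilon>)"
  shows "1 \<le> 1 / (\<kappa> * (1 - 4 * s)) * \<bar>A (\<mu>, \<epsilon>) * (1 - \<epsilon>) * x powr (- \<epsilon>) + P\<bar>"
proof -
  note c = cell_bounds[OF U z]
  have \<nu>: "0 \<le> 1 - \<epsilon>" "1 - s \<le> 1 - \<epsilon>" using c(2,3) by auto
  have Y: "0 < x powr (- \<epsilon>)" "U powr (- \<epsilon>) \<le> x powr (- \<epsilon>)"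
    using x c(1) by (auto intro: powr_mono2')
  note AY = mem_cellD(1)[OF z]
  show ?thesis
    by (rule expansion_rate_bound[OF \<nu> Y P AY c(10) c(8) _ margins(4,5)]) (use margins(3) in linarith)
qed

lemma cell_cross_u:
  assumes U: "0 < U" "U < \<rho>" and z: "(\<mu>, \<epsilon>) \<in> cell U"
    and x: "0 < x" "x \<le> U" and P: "\<bar>P\<bar> \<le> \<eta> * x powr (- \<epsilon>)"
    and G: "G \<le> n\<^sub>Q * (((1 - \<epsilon>) * norm (B (\<mu>, \<epsilon>)) + \<eta>) * x powr (- \<epsilon>))"
  shows "G \<le> 8 * n\<^sub>Q * (n\<^sub>B + 2) / a\<^sub>0 * \<bar>A (\<mu>, \<epsilon>) * (1 - \<epsilon>) * x powr (- \<epsilon>) + P\<bar>"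
proof -
  note c = cell_bounds[OF U z]
  have \<nu>: "0 \<le> 1 - \<epsilon>" "1 - \<epsilon> \<le> 1" using c(1,3) by auto
  have "0 < x powr (- \<epsilon>)" using x by simp
  from cone_ratio_bound[OF \<nu> this P less_imp_le[OF \<eta>(1)] \<eta>_small(2) c(9) A_sep(1) _ norm_ge_zero c(11) G]
  show ?thesis by simp
qed

lemma poincare_box_of_cell:
  assumes U: "0 < U" "U < \<rho>" and z: "(\<mu>, \<epsilon>) \<in> cell U"
  shows "poincare_box Q W K v\<^sub>0 \<delta> \<mu> \<epsilon> U r \<eta> (1 / (\<kappa> * (1 - 4 * s))) (n\<^sub>Q * n\<^sub>Q * \<eta>)
           (8 * n\<^sub>Q * (n\<^sub>B + 2) / a\<^sub>0) (n\<^sub>Q * \<eta>) A B vp p pu q qu pv qv"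
proof -
  note c = cell_bounds[OF U z]
  have small_x: "x powr (1 - \<epsilon>) \<le> 1" if "0 < x" "x \<le> U" for x
  proof -
    have "\<bar>x\<bar> \<le> 1" using that U \<rho>(3) by linarith
    then show ?thesis using c(3) by (intro powr_le1) auto
  qed
  have vp: "vp (\<mu>, \<epsilon>) \<in> ball v\<^sub>0 r"
  proof -
    have "r / (2 * n\<^sub>Q) \<le> r" using K(1) by (simp add: divide_le_eq)
    then have "norm (vp (\<mu>, \<epsilon>) - v\<^sub>0) < r" using \<beta>(4)[OF c(6)] by linarith
    then show ?thesis by (simp add: dist_norm norm_minus_commute)
  qed
  show ?thesis
  proof (rule poincare_box.intro)
    have \<mu>\<epsilon>: "\<bar>\<mu>\<bar> < \<delta>" "\<bar>\<epsilon>\<bar> < \<delta>" using c(4,5) \<rho>(2) by linarith+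
    show "0 < U" "U < \<delta>" "\<bar>\<mu>\<bar> < \<delta>" "\<epsilon> < 1" using U \<rho>(2) \<mu>\<epsilon> c(3) by linarith+
    show "vp (\<mu>, \<epsilon>) \<in> W" using vp K by blast
    show "((\<lambda>(y, w). p y w (\<mu>, \<epsilon>)) has_derivative
        (\<lambda>(h, k). h * pu x v (\<mu>, \<epsilon>) + blinfun_apply (pv x v (\<mu>, \<epsilon>)) k)) (at (x, v))"
      "((\<lambda>(y, w). q y w (\<mu>, \<epsilon>)) has_derivative
        (\<lambda>(h, k). h *\<^sub>R qu x v (\<mu>, \<epsilon>) + blinfun_apply (qv x v (\<mu>, \<epsilon>)) k)) (at (x, v))"
      if "0 < x" "x < \<delta>" "v \<in> W" for x v
      by (rule p_deriv[OF \<mu>\<epsilon> that], rule q_deriv[OF \<mu>\<epsilon> that])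
    show "\<bar>p x v (\<mu>, \<epsilon>)\<bar> \<le> \<eta> * x powr (1 - \<epsilon>) \<and>
          norm (q x v (\<mu>, \<epsilon>)) \<le> \<eta> * x powr (1 - \<epsilon>) \<and>
          norm (pv x v (\<mu>, \<epsilon>)) \<le> \<eta> * x powr (1 - \<epsilon>) \<and>
          norm (qv x v (\<mu>, \<epsilon>)) \<le> \<eta> * x powr (1 - \<epsilon>) \<and>
          \<bar>pu x v (\<mu>, \<epsilon>)\<bar> \<le> \<eta> * x powr (- \<epsilon>) \<and>
          norm (qu x v (\<mu>, \<epsilon>)) \<le> \<eta> * x powr (- \<epsilon>)" if "0 < x" "x \<le> U" "v \<in> W" for x v
      by (rule remainders[OF c(4,5) that(1) _ that(3)]) (use that U in linarith)
    show "n\<^sub>Q * (n\<^sub>Q * (\<eta> * x powr (1 - \<epsilon>))) \<le> n\<^sub>Q * n\<^sub>Q * \<eta>"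
      "n\<^sub>Q * (\<eta> * x powr (1 - \<epsilon>)) \<le> n\<^sub>Q * \<eta>" if "0 < x" "x \<le> U" for x
    proof -
      have "\<eta> * x powr (1 - \<epsilon>) \<le> \<eta>" using small_x[OF that] \<eta>(1) by (simp add: mult_left_le)
      then show d: "n\<^sub>Q * (\<eta> * x powr (1 - \<epsilon>)) \<le> n\<^sub>Q * \<eta>" by (rule mult_left_mono) simp
      show "n\<^sub>Q * (n\<^sub>Q * (\<eta> * x powr (1 - \<epsilon>))) \<le> n\<^sub>Q * n\<^sub>Q * \<eta>"
        unfolding mult.assoc[of n\<^sub>Q n\<^sub>Q \<eta>] by (rule mult_left_mono[OF d]) simp
    qed
    show "1 \<le> 1 / (\<kappa> * (1 - 4 * s)) * \<bar>A (\<mu>, \<epsilon>) * (1 - \<epsilon>) * x powr (- \<epsilon>) + P\<bar>"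
      if "0 < x" "x \<le> U" "\<bar>P\<bar> \<le> \<eta> * x powr (- \<epsilon>)" for x P
      using cell_expansion[OF U z that] .
    show "G \<le> 8 * n\<^sub>Q * (n\<^sub>B + 2) / a\<^sub>0 * \<bar>A (\<mu>, \<epsilon>) * (1 - \<epsilon>) * x powr (- \<epsilon>) + P\<bar>"
      if "0 < x" "x \<le> U" "\<bar>P\<bar> \<le> \<eta> * x powr (- \<epsilon>)"
        "G \<le> n\<^sub>Q * (((1 - \<epsilon>) * norm (B (\<mu>, \<epsilon>)) + \<eta>) * x powr (- \<epsilon>))" for x P G
      using cell_cross_u[OF U z that] .
    show "\<bar>\<mu> + A (\<mu>, \<epsilon>) * x powr (1 - \<epsilon>) + P\<bar> < U"
      if "0 < x" "x \<le> U" "\<bar>P\<bar> \<le> \<eta> * x powr (1 - \<epsilon>)" for x P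
      using cell_interval_invariant[OF U z that] .
    show "norm (vp (\<mu>, \<epsilon>) + x powr (1 - \<epsilon>) *\<^sub>R B (\<mu>, \<epsilon>) + w - v\<^sub>0) < r / n\<^sub>Q"
      if "0 < x" "x \<le> U" "norm w \<le> \<eta> * x powr (1 - \<epsilon>)" for x w
      using cell_centre_invariant[OF U z that] .
  qed (fact Q_lin W_sym K hyperbolicity_constants)+
qed

end

context unfolding_constants
begin

lemma mem_cell_at_scale:
  assumes U: "0 < U" "U \<le> r * a\<^sub>0 / (4 * n\<^sub>Q * \<kappa> * (n\<^sub>B + 2))"
    and \<epsilon>: "0 < \<epsilon>" "\<epsilon> < \<rho>" "U powr (- \<epsilon>) = \<kappa> / a\<^sub>0"
    and \<mu>: "\<bar>- \<sigma> * (\<kappa> / 2) * U\<bar> < \<rho>" and \<beta>z: "norm (- \<sigma> * (\<kappa> / 2) * U, \<epsilon>) < \<beta>"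
  shows "(- \<sigma> * (\<kappa> / 2) * U, \<epsilon>) \<in> cell U"
proof -
  define z where "z = (- \<sigma> * (\<kappa> / 2) * U, \<epsilon>)"
  have \<kappa>a: "0 < \<kappa> / a\<^sub>0" using margins A_sep by simp
  note A = A_near_origin[OF \<beta>z[folded z_def]]
  have "\<bar>(\<bar>A z\<bar> - a\<^sub>0) * (\<kappa> / a\<^sub>0)\<bar> < s * a\<^sub>0 / 2 * (\<kappa> / a\<^sub>0)"
    unfolding abs_mult abs_of_pos[OF \<kappa>a] by (rule mult_strict_right_mono[OF A(3) \<kappa>a])
  also have "\<dots> = s * \<kappa> / 2" using A_sep by (simp add: field_simps)
  also have "\<dots> < s * \<kappa>" using margins A_sep by simp
  finally have dev: "\<bar>(\<bar>A z\<bar> - a\<^sub>0) * (\<kappa> / a\<^sub>0)\<bar> < s * \<kappa>" .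
  have "(\<bar>A z\<bar> - a\<^sub>0) * (\<kappa> / a\<^sub>0) = \<bar>A z\<bar> * (\<kappa> / a\<^sub>0) - \<kappa>" using A_sep by (simp add: field_simps)
  with dev have "- (s * \<kappa>) < \<bar>A z\<bar> * (\<kappa> / a\<^sub>0) - \<kappa>" "\<bar>A z\<bar> * (\<kappa> / a\<^sub>0) - \<kappa> < s * \<kappa>"
    by (auto simp only: abs_less_iff)
  then have window: "\<kappa> * (1 - s) < \<bar>A z\<bar> * (\<kappa> / a\<^sub>0)" "\<bar>A z\<bar> * (\<kappa> / a\<^sub>0) < \<kappa> * (1 + s)"
    by (simp_all add: right_diff_distrib distrib_left mult.commute)
  have \<sigma>: "\<sigma> * \<sigma> = 1" using A_sep by (simp add: sgn_if)
  then have drift: "\<sigma> * fst z / U = - (\<kappa> / 2)" using U by (simp add: z_def field_simps)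
  have "U powr (1 - \<epsilon>) * (norm (B z) + \<eta>) \<le> U * (\<kappa> / a\<^sub>0) * (n\<^sub>B + 2)"
  proof -
    have "norm (B z) \<le> n\<^sub>B + 1" using \<beta>(3)[OF \<beta>z[folded z_def]] norm_triangle_ineq2[of "B z" "B (0, 0)"]
      by linarith
    then have "norm (B z) + \<eta> \<le> n\<^sub>B + 2" using \<eta>_small(2) by linarith
    moreover have "U powr (1 - \<epsilon>) = U * (\<kappa> / a\<^sub>0)" using U \<epsilon>(3) powr_add[of U 1 "- \<epsilon>"] by simp
    moreover have "0 \<le> U * (\<kappa> / a\<^sub>0)" using mult_nonneg_nonneg[OF less_imp_le[OF U(1)] less_imp_le[OF \<kappa>a]] .
    ultimately show ?thesis by (simp only: mult_left_mono)
  qed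
  also have "\<dots> \<le> r / (4 * n\<^sub>Q)"
  proof -
    have "U * (\<kappa> / a\<^sub>0) * (n\<^sub>B + 2) \<le> r * a\<^sub>0 / (4 * n\<^sub>Q * \<kappa> * (n\<^sub>B + 2)) * (\<kappa> / a\<^sub>0) * (n\<^sub>B + 2)"
      using U \<kappa>a margins(1) A_sep(1) by (intro mult_right_mono) auto
    also have "\<dots> = r / (4 * n\<^sub>Q)"
    proof -
      have gen: "r * a / (4 * n * k * b) * (k / a) * b = r / (4 * n)"
        if "a \<noteq> 0" "k \<noteq> 0" "b \<noteq> 0" "n \<noteq> 0" for a k b n :: real
        using that by (simp add: field_simps)
      have "0 < n\<^sub>B + 2" by (simp add: add_nonneg_pos)
      then show ?thesis by (intro gen) (use A_sep margins(1) in auto)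
    qed
    finally show ?thesis .
  qed
  finally have "norm (vp z - v\<^sub>0) + U powr (1 - \<epsilon>) * (norm (B z) + \<eta>) < r / n\<^sub>Q"
    using \<beta>(4)[OF \<beta>z[folded z_def]] K(1) by (simp add: field_simps)
  then show ?thesis
    using U \<epsilon> \<mu> \<beta>z window drift margins A_sep unfolding z_def[symmetric] by (simp add: cell_def z_def)
qed

lemma cell_near_origin:
  assumes "0 < e"
  obtains U z where "0 < U" "U < \<rho>" "z \<in> cell U" "norm z < e"
proof -
  define m where "m = min \<rho> (min (e / 2) (min (\<beta> / 2) (r * a\<^sub>0 / (4 * n\<^sub>Q * \<kappa> * (n\<^sub>B + 2)))))"
  have m: "0 < m" "m \<le> \<rho>" "m \<le> e / 2" "m \<le> \<beta> / 2" "m \<le> r * a\<^sub>0 / (4 * n\<^sub>Q * \<kappa> * (n\<^sub>B + 2))"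
    using assms \<rho> \<beta> K A_sep margins by (auto simp: m_def add_nonneg_pos)
  have "1 < \<kappa> / a\<^sub>0" using margins A_sep by simp
  then obtain U \<epsilon> where U: "0 < U" "U < m" "0 < \<epsilon>" "\<epsilon> < m" "U powr (- \<epsilon>) = \<kappa> / a\<^sub>0"
    using small_scale_with_exponent m(1) by metis
  define \<mu> where "\<mu> = - \<sigma> * (\<kappa> / 2) * U"
  have "\<bar>\<mu>\<bar> \<le> U" using A_sep margins U by (simp add: \<mu>_def abs_mult sgn_if)
  then have n: "norm (\<mu>, \<epsilon>) < 2 * m" "\<bar>\<mu>\<bar> < \<rho>" using norm_Pair_le[of \<mu> \<epsilon>] U m by auto
  show thesis
  proof (rule that[OF U(1)])
    show "U < \<rho>" using U m by linarith
    show "(\<mu>, \<epsilon>) \<in> cell U" unfolding \<mu>_def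
      by (rule mem_cell_at_scale) (use U m n in \<open>auto simp: \<mu>_def\<close>)
    show "norm (\<mu>, \<epsilon>) < e" using n m by linarith
  qed
qed

theorem lorenz_region:
  "\<exists>V :: (real \<times> real) set. open V \<and> (0, 0) \<in> closure V \<and>
     (\<forall>(\<mu>, \<epsilon>) \<in> V. lorenz_attractor {(u, v). \<bar>u\<bar> < \<delta> \<and> v \<in> W}
        (poincare_map A B vp Q p q (\<mu>, \<epsilon>)) (\<mu>, vp (\<mu>, \<epsilon>)) (- \<mu>, Q (vp (\<mu>, \<epsilon>))))"
proof (intro exI conjI)
  let ?V = "\<Union>U \<in> {0<..<\<rho>}. cell U"
  show "open ?V" using open_cell by auto
  show "(0, 0) \<in> closure ?V" unfolding closure_approachable
  proof (intro allI impI)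
    fix e :: real assume "0 < e"
    then obtain U z where "0 < U" "U < \<rho>" "z \<in> cell U" "norm z < e" by (rule cell_near_origin)
    then show "\<exists>z \<in> ?V. dist z (0, 0) < e" by (auto simp: dist_norm simp flip: zero_prod_def)
  qed
  show "\<forall>(\<mu>, \<epsilon>) \<in> ?V. lorenz_attractor {(u, v). \<bar>u\<bar> < \<delta> \<and> v \<in> W}
        (poincare_map A B vp Q p q (\<mu>, \<epsilon>)) (\<mu>, vp (\<mu>, \<epsilon>)) (- \<mu>, Q (vp (\<mu>, \<epsilon>)))"
    using poincare_box.lorenz_attractor[OF poincare_box_of_cell] by auto
qed

end

lemma continuous_on_UNIV_ball:
  assumes "continuous_on UNIV f" "0 < e"
  obtains d where "0 < d" "\<And>z. dist z a < d \<Longrightarrow> dist (f z) (f a) < e"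
  using assms unfolding continuous_on_iff by blast

context butterfly_unfolding
begin

lemma exists_unfolding_constants:
  obtains \<kappa> s \<eta> \<rho> \<beta> r K where "unfolding_constants Q W \<delta> A B vp p pu q qu pv qv \<kappa> s \<eta> \<rho> \<beta> r K"
proof -
  define \<kappa> where "\<kappa> = (max 1 a\<^sub>0 + 2) / 2"
  define s where "s = min (\<kappa> - 1) (1 - \<kappa> / 2) / 16"
  note margins = expansion_margins[OF A_sep, folded \<kappa>_def, folded s_def]
  define \<eta> where "\<eta> = min (s * a\<^sub>0) (min (1 / (2 * n\<^sub>Q * n\<^sub>Q))
    ((1 - 1 / (\<kappa> * (1 - 4 * s))) * a\<^sub>0 / (32 * n\<^sub>Q * n\<^sub>Q * (n\<^sub>B + 2))))"
  have "0 < \<eta>" using margins A_sep by (simp add: \<eta>_def add_nonneg_pos)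
  then obtain \<rho>\<^sub>0 where \<rho>\<^sub>0: "0 < \<rho>\<^sub>0" and remainders: "\<forall>\<mu> \<epsilon> x v.
      \<bar>\<mu>\<bar> < \<rho>\<^sub>0 \<and> \<bar>\<epsilon>\<bar> < \<rho>\<^sub>0 \<and> 0 < x \<and> x < \<rho>\<^sub>0 \<and> v \<in> W \<longrightarrow>
          \<bar>p x v (\<mu>, \<epsilon>)\<bar> \<le> \<eta> * x powr (1 - \<epsilon>) \<and>
          norm (q x v (\<mu>, \<epsilon>)) \<le> \<eta> * x powr (1 - \<epsilon>) \<and>
          norm (pv x v (\<mu>, \<epsilon>)) \<le> \<eta> * x powr (1 - \<epsilon>) \<and>
          norm (qv x v (\<mu>, \<epsilon>)) \<le> \<eta> * x powr (1 - \<epsilon>) \<and>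
          \<bar>pu x v (\<mu>, \<epsilon>)\<bar> \<le> \<eta> * x powr (- \<epsilon>) \<and>
          norm (qu x v (\<mu>, \<epsilon>)) \<le> \<eta> * x powr (- \<epsilon>)"
    using small by blast
  define \<rho> where "\<rho> = min \<rho>\<^sub>0 (min \<delta> (min 1 s))"
  have "Q v\<^sub>0 \<in> W" using vp_W W_sym by blast
  then obtain r K where K: "0 < r" "closed K" "convex K" "K \<subseteq> W" "ball v\<^sub>0 r \<subseteq> K" "ball (Q v\<^sub>0) r \<subseteq> K"
    using convex_closed_neighbourhood_of_two_points[OF W_open W_convex vp_W] by blast
  have "0 < s * a\<^sub>0 / 2" "0 < r / (2 * n\<^sub>Q)" using margins A_sep K by auto
  then obtain \<beta>\<^sub>A \<beta>\<^sub>B \<beta>\<^sub>v where "0 < \<beta>\<^sub>A" "0 < \<beta>\<^sub>B" "0 < \<beta>\<^sub>v"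
      and A_close: "\<And>z. dist z (0, 0) < \<beta>\<^sub>A \<Longrightarrow> dist (A z) (A (0, 0)) < s * a\<^sub>0 / 2"
      and B_close: "\<And>z. dist z (0, 0) < \<beta>\<^sub>B \<Longrightarrow> dist (B z) (B (0, 0)) < 1"
      and vp_close: "\<And>z. dist z (0, 0) < \<beta>\<^sub>v \<Longrightarrow> dist (vp z) v\<^sub>0 < r / (2 * n\<^sub>Q)"
    by (metis continuous_on_UNIV_ball A_cont B_cont vp_cont zero_less_one)
  define \<beta> where "\<beta> = min \<beta>\<^sub>A (min \<beta>\<^sub>B \<beta>\<^sub>v)"
  have dist_origin: "dist z (0, 0) = norm z" for z :: "real \<times> real" by (simp add: dist_norm flip: zero_prod_def)
  have \<beta>: "0 < \<beta>" "\<And>z. norm z < \<beta> \<Longrightarrow> \<bar>A z - A (0, 0)\<bar> < s * a\<^sub>0 / 2"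
    "\<And>z. norm z < \<beta> \<Longrightarrow> norm (B z - B (0, 0)) < 1"
    "\<And>z. norm z < \<beta> \<Longrightarrow> norm (vp z - v\<^sub>0) < r / (2 * n\<^sub>Q)"
    using \<open>0 < \<beta>\<^sub>A\<close> \<open>0 < \<beta>\<^sub>B\<close> \<open>0 < \<beta>\<^sub>v\<close> A_close[unfolded dist_origin dist_real_def]
      B_close[unfolded dist_origin, unfolded dist_norm] vp_close[unfolded dist_origin, unfolded dist_norm]
    by (simp_all add: \<beta>_def)
  show thesis
  proof (rule that[of \<kappa> s \<eta> \<rho> \<beta> r K], rule unfolding_constants.intro[OF butterfly_unfolding_axioms],
      rule unfolding_constants_axioms.intro)
    show "0 < \<eta>" "\<eta> \<le> s * a\<^sub>0" "\<eta> \<le> 1 / (2 * n\<^sub>Q * n\<^sub>Q)"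
      "\<eta> \<le> (1 - 1 / (\<kappa> * (1 - 4 * s))) * a\<^sub>0 / (32 * n\<^sub>Q * n\<^sub>Q * (n\<^sub>B + 2))"
      using \<open>0 < \<eta>\<close> by (simp_all add: \<eta>_def min_le_iff_disj)
    show "0 < \<rho>" "\<rho> \<le> \<delta>" "\<rho> \<le> 1" "\<rho> \<le> s" using \<rho>\<^sub>0 \<delta>_pos margins by (auto simp: \<rho>_def)
    show "\<bar>p x v (\<mu>, \<epsilon>)\<bar> \<le> \<eta> * x powr (1 - \<epsilon>) \<and>
          norm (q x v (\<mu>, \<epsilon>)) \<le> \<eta> * x powr (1 - \<epsilon>) \<and>
          norm (pv x v (\<mu>, \<epsilon>)) \<le> \<eta> * x powr (1 - \<epsilon>) \<and>
          norm (qv x v (\<mu>, \<epsilon>)) \<le> \<eta> * x powr (1 - \<epsilon>) \<and>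
          \<bar>pu x v (\<mu>, \<epsilon>)\<bar> \<le> \<eta> * x powr (- \<epsilon>) \<and>
          norm (qu x v (\<mu>, \<epsilon>)) \<le> \<eta> * x powr (- \<epsilon>)"
      if "\<bar>\<mu>\<bar> < \<rho>" "\<bar>\<epsilon>\<bar> < \<rho>" "0 < x" "x < \<rho>" "v \<in> W" for \<mu> \<epsilon> x v
      using remainders that by (auto simp: \<rho>_def)
  qed (use margins \<beta> K in auto)
qed

theorem lorenz_attractor_region:
  "\<exists>V :: (real \<times> real) set. open V \<and> (0, 0) \<in> closure V \<and>
     (\<forall>(\<mu>, \<epsilon>) \<in> V. lorenz_attractor {(u, v). \<bar>u\<bar> < \<delta> \<and> v \<in> W}
        (poincare_map A B vp Q p q (\<mu>, \<epsilon>)) (\<mu>, vp (\<mu>, \<epsilon>)) (- \<mu>, Q (vp (\<mu>, \<epsilon>))))"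
proof -
  obtain \<kappa> s \<eta> \<rho> \<beta> r K where "unfolding_constants Q W \<delta> A B vp p pu q qu pv qv \<kappa> s \<eta> \<rho> \<beta> r K"
    by (rule exists_unfolding_constants)
  then show ?thesis by (rule unfolding_constants.lorenz_region)
qed

end

theorem theorem2:
  fixes Q :: "'v::euclidean_space \<Rightarrow> 'v"
    and W :: "'v set"
    and \<delta> :: real
    and A :: "real \<times> real \<Rightarrow> real"
    and B vp :: "real \<times> real \<Rightarrow> 'v"
    and p pu :: "real \<Rightarrow> 'v \<Rightarrow> real \<times> real \<Rightarrow> real"
    and q qu :: "real \<Rightarrow> 'v \<Rightarrow> real \<times> real \<Rightarrow> 'v"
    and pv :: "real \<Rightarrow> 'v \<Rightarrow> real \<times> real \<Rightarrow> ('v \<Rightarrow>\<^sub>L real)"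
    and qv :: "real \<Rightarrow> 'v \<Rightarrow> real \<times> real \<Rightarrow> ('v \<Rightarrow>\<^sub>L 'v)"
  assumes Q_lin: "linear Q"
    and Q_inv: "\<And>v. Q (Q v) = v"
    and W_open: "open W" and W_convex: "convex W" and W_sym: "Q ` W = W"
    and vp_W: "vp (0, 0) \<in> W"
    and \<delta>_pos: "\<delta> > 0"
    and A_cont: "continuous_on UNIV A"
    and B_cont: "continuous_on UNIV B"
    and vp_cont: "continuous_on UNIV vp"
    and A_sep: "0 < \<bar>A (0, 0)\<bar>" "\<bar>A (0, 0)\<bar> < 2"
    and p_deriv: "\<And>\<mu> \<epsilon> x v. \<bar>\<mu>\<bar> < \<delta> \<Longrightarrow> \<bar>\<epsilon>\<bar> < \<delta> \<Longrightarrow> 0 < x \<Longrightarrow> x < \<delta> \<Longrightarrow> v \<in> W \<Longrightarrow>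
        ((\<lambda>(y, w). p y w (\<mu>, \<epsilon>)) has_derivative
           (\<lambda>(h, k). h * pu x v (\<mu>, \<epsilon>) + blinfun_apply (pv x v (\<mu>, \<epsilon>)) k)) (at (x, v))"
    and q_deriv: "\<And>\<mu> \<epsilon> x v. \<bar>\<mu>\<bar> < \<delta> \<Longrightarrow> \<bar>\<epsilon>\<bar> < \<delta> \<Longrightarrow> 0 < x \<Longrightarrow> x < \<delta> \<Longrightarrow> v \<in> W \<Longrightarrow>
        ((\<lambda>(y, w). q y w (\<mu>, \<epsilon>)) has_derivative
           (\<lambda>(h, k). h *\<^sub>R qu x v (\<mu>, \<epsilon>) + blinfun_apply (qv x v (\<mu>, \<epsilon>)) k)) (at (x, v))"
    and small: "\<And>\<eta>. \<eta> > 0 \<Longrightarrow> \<exists>\<rho>>0. \<forall>\<mu> \<epsilon> x v.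
        \<bar>\<mu>\<bar> < \<rho> \<and> \<bar>\<epsilon>\<bar> < \<rho> \<and> 0 < x \<and> x < \<rho> \<and> v \<in> W \<longrightarrow>
          \<bar>p x v (\<mu>, \<epsilon>)\<bar> \<le> \<eta> * x powr (1 - \<epsilon>) \<and>
          norm (q x v (\<mu>, \<epsilon>)) \<le> \<eta> * x powr (1 - \<epsilon>) \<and>
          norm (pv x v (\<mu>, \<epsilon>)) \<le> \<eta> * x powr (1 - \<epsilon>) \<and>
          norm (qv x v (\<mu>, \<epsilon>)) \<le> \<eta> * x powr (1 - \<epsilon>) \<and>
          \<bar>pu x v (\<mu>, \<epsilon>)\<bar> \<le> \<eta> * x powr (- \<epsilon>) \<and>
          norm (qu x v (\<mu>, \<epsilon>)) \<le> \<eta> * x powr (- \<epsilon>)"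
  shows "\<exists>V :: (real \<times> real) set. open V \<and> (0, 0) \<in> closure V \<and>
           (\<forall>(\<mu>, \<epsilon>) \<in> V.
              lorenz_attractor {(u, v). \<bar>u\<bar> < \<delta> \<and> v \<in> W}
                (poincare_map A B vp Q p q (\<mu>, \<epsilon>))
                (\<mu>, vp (\<mu>, \<epsilon>)) (- \<mu>, Q (vp (\<mu>, \<epsilon>))))"
proof -
  interpret butterfly_unfolding Q W \<delta> A B vp p pu q qu pv qv
    by (rule butterfly_unfolding.intro) (fact assms)+
  show ?thesis by (rule lorenz_attractor_region)
qed

end
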